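(* Suppose $X\subseteq\{1,\dots,n\}$ with $|X|<n$, let $x\in X$ and $y\in\{1,\dots,n\}-X$, and assume $n\geq 2$. Let $C(X,x,y)$ be the chain complex with $C(X,x,y)_k=\mathcal P_n/J_{X-\{x\}}$ for every $k\geq 0$, whose differential $C_{k}\to C_{k-1}$ is right multiplication by $1-T_xV_{xy}$ when $k$ is odd and by $T_xV_{xy}$ when $k\geq 2$ is even, augmented by $C_0=\mathcal P_n/J_{X-\{x\}}\to\mathcal A_{X,x}$, right multiplication by $T_x$. Then $C(X,x,y)\to\mathcal A_{X,x}$ is a resolution (the augmented complex is exact), and $\mathbb 1\otimes_{\mathcal P_n}C(X,x,y)\to\mathbb 1\otimes_{\mathcal P_n}\mathcal A_{X,x}$ is also a resolution.
   Context: $R$ is a commutative ring, $\delta\in R$, and $\mathcal P_n=\mathcal P_n(R,\delta)$ is the partition algebra: the free $R$-module on set partitions ("diagrams") of $\{-n,\dots,-1,1,\dots,n\}$ (negative = left nodes, positive = right nodes), with product by stacking (identifying right nodes of the first diagram with left nodes of the second), taking the induced partition on outer nodes, and multiplying by $\delta$ for each component consisting only of middle nodes. $\mathbb 1$ is the trivial right module $R$ on which permutation diagrams (blocks all of the form $\{-i,j\}$) act as the identity and other diagrams as $0$. For $Z\subseteq\{1,\dots,n\}$, $J_Z$ is the left ideal spanned by diagrams in which among the right nodes labelled by $Z$ there is a singleton block or two distinct nodes in the same block. $A_x$ is the left submodule spanned by diagrams with the right node $x$ a singleton, and $\mathcal A_{X,x}=A_x/(A_x\cap J_{X-\{x\}})$.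 $T_x$ is the diagram with blocks $\{-j,j\}$ for $j\neq x$ and singletons $\{-x\},\{x\}$; for $x\neq y$, $V_{xy}$ is the diagram with blocks $\{-k,k\}$ for $k\neq x,y$ and the block $\{-x,-y,x,y\}$. (Right multiplication by these elements is well defined on the quotients involved.) *)

theory Defs
  imports Main "HOL-Library.Disjoint_Sets"
begin

text \<open>Nodes: left nodes -n..-1, right nodes 1..n (as integers).
  A diagram is a set partition of the nodes (a set of blocks).\<close>

definition nodes :: "nat \<Rightarrow> int set" where
  "nodes n = {- int n .. -1} \<union> {1 .. int n}"

definition diagrams :: "nat \<Rightarrow> int set set set" where
  "diagrams n = {d. partition_on (nodes n) d}"

text \<open>Stacking d1 on top of d2: right nodes of d1 are identified with left nodes of d2.
  Layer 0 = left nodes of d1, layer 1 = middle, layer 2 = right nodes of d2.\<close>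

definition emb1 :: "int \<Rightarrow> nat \<times> int" where
  "emb1 i = (if i < 0 then (0, - i) else (1, i))"

definition emb2 :: "int \<Rightarrow> nat \<times> int" where
  "emb2 i = (if i < 0 then (1, - i) else (2, i))"

definition stack_rel :: "int set set \<Rightarrow> int set set \<Rightarrow> ((nat \<times> int) \<times> (nat \<times> int)) set" where
  "stack_rel d1 d2 = (\<Union>B\<in>d1. emb1 ` B \<times> emb1 ` B) \<union> (\<Union>B\<in>d2. emb2 ` B \<times> emb2 ` B)"

definition stack_nodes :: "nat \<Rightarrow> (nat \<times> int) set" where
  "stack_nodes n = {0, 1, 2} \<times> {1 .. int n}"

definition stack_comps :: "nat \<Rightarrow> int set set \<Rightarrow> int set set \<Rightarrow> (nat \<times> int) set set" where
  "stack_comps n d1 d2 = stack_nodes n // ((stack_rel d1 d2)\<^sup>*)"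

definition unemb :: "nat \<times> int \<Rightarrow> int" where
  "unemb p = (if fst p = 0 then - snd p else snd p)"

definition dcomp :: "nat \<Rightarrow> int set set \<Rightarrow> int set set \<Rightarrow> int set set" where
  "dcomp n d1 d2 = {unemb ` (C \<inter> {p. fst p \<noteq> 1}) | C. C \<in> stack_comps n d1 d2 \<and> C \<inter> {p. fst p \<noteq> 1} \<noteq> {}}"

definition dloops :: "nat \<Rightarrow> int set set \<Rightarrow> int set set \<Rightarrow> nat" where
  "dloops n d1 d2 = card {C \<in> stack_comps n d1 d2. C \<subseteq> {p. fst p = 1}}"

text \<open>Elements of P_n: R-valued functions on diagrams supported on diagrams of size n
  (the free R-module on the diagrams).\<close>

definition palg :: "nat \<Rightarrow> (int set set \<Rightarrow> 'r::comm_ring_1) set" where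
  "palg n = {f. \<forall>d. d \<notin> diagrams n \<longrightarrow> f d = 0}"

definition basis :: "int set set \<Rightarrow> int set set \<Rightarrow> 'r::comm_ring_1" where
  "basis d = (\<lambda>e. if e = d then 1 else 0)"

definition pmult :: "nat \<Rightarrow> 'r::comm_ring_1 \<Rightarrow> (int set set \<Rightarrow> 'r) \<Rightarrow> (int set set \<Rightarrow> 'r) \<Rightarrow> (int set set \<Rightarrow> 'r)" where
  "pmult n \<delta> f g = (\<lambda>d. \<Sum>d1\<in>diagrams n. \<Sum>d2\<in>diagrams n.
      if dcomp n d1 d2 = d then f d1 * g d2 * \<delta> ^ dloops n d1 d2 else 0)"

definition padd :: "('a \<Rightarrow> 'r::comm_ring_1) \<Rightarrow> ('a \<Rightarrow> 'r) \<Rightarrow> ('a \<Rightarrow> 'r)" where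
  "padd f g = (\<lambda>d. f d + g d)"

definition psub :: "('a \<Rightarrow> 'r::comm_ring_1) \<Rightarrow> ('a \<Rightarrow> 'r) \<Rightarrow> ('a \<Rightarrow> 'r)" where
  "psub f g = (\<lambda>d. f d - g d)"

definition idd :: "nat \<Rightarrow> int set set" where
  "idd n = {{- j, j} | j. j \<in> {1 .. int n}}"

definition Tdiag :: "nat \<Rightarrow> int \<Rightarrow> int set set" where
  "Tdiag n x = {{- j, j} | j. j \<in> {1 .. int n} \<and> j \<noteq> x} \<union> {{- x}, {x}}"

definition Vdiag :: "nat \<Rightarrow> int \<Rightarrow> int \<Rightarrow> int set set" where
  "Vdiag n x y = {{- k, k} | k. k \<in> {1 .. int n} \<and> k \<noteq> x \<and> k \<noteq> y} \<union> {{- x, - y, x, y}}"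

text \<open>Permutation diagrams and the trivial module: diagrams act on 1 via eps.\<close>
definition is_perm :: "int set set \<Rightarrow> bool" where
  "is_perm d = (\<forall>B\<in>d. \<exists>i j. i > 0 \<and> j > 0 \<and> B = {- i, j})"

definition eps :: "int set set \<Rightarrow> 'r::comm_ring_1" where
  "eps d = (if is_perm d then 1 else 0)"

definition jdiag :: "int set \<Rightarrow> int set set \<Rightarrow> bool" where
  "jdiag Z d = ((\<exists>z\<in>Z. {z} \<in> d) \<or> (\<exists>z1\<in>Z. \<exists>z2\<in>Z. z1 \<noteq> z2 \<and> (\<exists>B\<in>d. z1 \<in> B \<and> z2 \<in> B)))"

definition Jideal :: "nat \<Rightarrow> int set \<Rightarrow> (int set set \<Rightarrow> 'r::comm_ring_1) set" where
  "Jideal n Z = {f \<in> palg n. \<forall>d. f d \<noteq> 0 \<longrightarrow> jdiag Z d}"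

definition Aspan :: "nat \<Rightarrow> int \<Rightarrow> (int set set \<Rightarrow> 'r::comm_ring_1) set" where
  "Aspan n x = {f \<in> palg n. \<forall>d. f d \<noteq> 0 \<longrightarrow> {x} \<in> d}"

definition rspan :: "('a \<Rightarrow> 'r::comm_ring_1) set \<Rightarrow> ('a \<Rightarrow> 'r) set" where
  "rspan S = {v. \<exists>F c. finite F \<and> F \<subseteq> S \<and> v = (\<lambda>e. \<Sum>s\<in>F. c s * s e)}"

definition setplus :: "('a \<Rightarrow> 'r::comm_ring_1) set \<Rightarrow> ('a \<Rightarrow> 'r) set \<Rightarrow> ('a \<Rightarrow> 'r) set" where
  "setplus A B = {padd a b | a b. a \<in> A \<and> b \<in> B}"

text \<open>1 \<otimes>_{P_n} (M/N) = M / (N + span{d m - eps(d) m | d diagram, m \<in> M}).\<close>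
definition tensor1 :: "nat \<Rightarrow> 'r::comm_ring_1 \<Rightarrow>
    (int set set \<Rightarrow> 'r) set \<times> (int set set \<Rightarrow> 'r) set \<Rightarrow>
    (int set set \<Rightarrow> 'r) set \<times> (int set set \<Rightarrow> 'r) set" where
  "tensor1 n \<delta> MN = (fst MN, setplus (snd MN)
      (rspan {psub (pmult n \<delta> (basis d) m) (\<lambda>e. eps d * m e) | d m. d \<in> diagrams n \<and> m \<in> fst MN}))"

text \<open>Exactness of the augmented complex ... \<rightarrow> C \<rightarrow> C \<rightarrow> C \<rightarrow> A \<rightarrow> 0, where all C_k equal the
  subquotient C, the differential C_k \<rightarrow> C_(k-1) (k \<ge> 1) is right multiplication by u k, and the
  augmentation C_0 \<rightarrow> A is right multiplication by aug (all maps given on representatives).\<close>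
definition aug_exact :: "nat \<Rightarrow> 'r::comm_ring_1 \<Rightarrow>
    (int set set \<Rightarrow> 'r) set \<times> (int set set \<Rightarrow> 'r) set \<Rightarrow>
    (int set set \<Rightarrow> 'r) set \<times> (int set set \<Rightarrow> 'r) set \<Rightarrow>
    (nat \<Rightarrow> (int set set \<Rightarrow> 'r)) \<Rightarrow> (int set set \<Rightarrow> 'r) \<Rightarrow> bool" where
  "aug_exact n \<delta> C A u aug \<longleftrightarrow>
     (\<forall>c\<in>fst A. \<exists>a\<in>fst C. psub c (pmult n \<delta> a aug) \<in> snd A) \<and>
     {a \<in> fst C. pmult n \<delta> a aug \<in> snd A} =
       {a \<in> fst C. \<exists>b\<in>fst C. psub a (pmult n \<delta> b (u 1)) \<in> snd C} \<and>
     (\<forall>k\<ge>1. {a \<in> fst C. pmult n \<delta> a (u k) \<in> snd C} =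
       {a \<in> fst C. \<exists>b\<in>fst C. psub a (pmult n \<delta> b (u (Suc k))) \<in> snd C})"

definition cdiff :: "nat \<Rightarrow> 'r::comm_ring_1 \<Rightarrow> int \<Rightarrow> int \<Rightarrow> nat \<Rightarrow> (int set set \<Rightarrow> 'r)" where
  "cdiff n \<delta> x y k =
     (if odd k then psub (basis (idd n)) (pmult n \<delta> (basis (Tdiag n x)) (basis (Vdiag n x y)))
      else pmult n \<delta> (basis (Tdiag n x)) (basis (Vdiag n x y)))"

end

theory Submission
  imports Defs "HOL-Library.Function_Algebras" "HOL.Modules"
begin

(* Right multiplication E by T_x V_xy is idempotent: d T_x V_xy detaches the right node x from d
   and attaches it to the block of y (with a factor delta if {x} is a block of d), and repeating
   this changes nothing. For an idempotent E and an E-stable subgroup N, the complex with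
   differentials alternately 1 - E and E is exact modulo N, because ker E = im (1 - E) and
   ker (1 - E) = im E. Here N = J_{X-{x}}, which is E-stable since x and y are not in X - {x}.
   In degree zero, a T_x and a T_x V_xy have the same coefficients on corresponding diagrams, so
   a T_x lies in J exactly when E a does, and every diagram of A_x is e T_x for the diagram e
   obtained by attaching x to the block of y. After tensoring with the trivial module the
   relations d m = eps(d) m make T_x V_xy and all of A_x vanish, as eps(T_x) = 0 = eps(e), so
   the tensored complex is exact as well.

   Products of diagrams are computed by labelling the nodes of the stacked diagram so that the
   connected components are exactly the fibres of the labelling. *)

section \<open>Blocks and stacked diagrams\<close>

lemma finite_diagrams: "finite (diagrams n)"
proof -
  have "diagrams n \<subseteq> Pow (Pow (nodes n))"
    by (auto simp: diagrams_def partition_on_def)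
  then show ?thesis
    by (rule finite_subset) (simp add: nodes_def)
qed

lemma diagram_block_subset: "d \<in> diagrams n \<Longrightarrow> B \<in> d \<Longrightarrow> B \<subseteq> nodes n"
  by (auto simp: diagrams_def partition_on_def)

lemma diagram_block_nonempty: "d \<in> diagrams n \<Longrightarrow> B \<in> d \<Longrightarrow> B \<noteq> {}"
  by (auto simp: diagrams_def partition_on_def)

definition block_of :: "int set set \<Rightarrow> int \<Rightarrow> int set" where
  "block_of d i = (THE B. B \<in> d \<and> i \<in> B)"

lemma block_of_eq:
  assumes "d \<in> diagrams n" "B \<in> d" "i \<in> B"
  shows "block_of d i = B"
  unfolding block_of_def
proof (rule the_equality)
  have "disjoint d"
    using assms(1) by (simp add: diagrams_def partition_on_def)
  then show "C = B" if "C \<in> d \<and> i \<in> C" for C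
    using that assms(2,3) by (auto simp: disjoint_def)
qed (use assms in auto)

lemma block_of_mem:
  assumes "d \<in> diagrams n" "i \<in> nodes n"
  shows "block_of d i \<in> d" "i \<in> block_of d i"
proof -
  obtain B where "B \<in> d" "i \<in> B"
    using assms by (auto simp: diagrams_def partition_on_def)
  then show "block_of d i \<in> d" "i \<in> block_of d i"
    using block_of_eq[OF assms(1)] by auto
qed

lemma block_of_eq_iff:
  "d \<in> diagrams n \<Longrightarrow> B \<in> d \<Longrightarrow> i \<in> nodes n \<Longrightarrow> block_of d i = B \<longleftrightarrow> i \<in> B"
  using block_of_eq block_of_mem by metis

lemma emb1_unemb: "p \<in> stack_nodes n \<Longrightarrow> fst p \<noteq> 2 \<Longrightarrow> emb1 (unemb p) = p"
  by (cases p) (auto simp: stack_nodes_def unemb_def emb1_def)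

lemma unemb_in_nodes: "p \<in> stack_nodes n \<Longrightarrow> unemb p \<in> nodes n"
  by (cases p) (auto simp: stack_nodes_def unemb_def nodes_def)

lemma mem_nodes_iff: "i \<in> nodes n \<longleftrightarrow> i \<noteq> 0 \<and> \<bar>i\<bar> \<le> int n"
  by (auto simp: nodes_def)

lemma emb1_in_stack_nodes: "i \<in> nodes n \<Longrightarrow> emb1 i \<in> stack_nodes n"
  by (auto simp: emb1_def stack_nodes_def mem_nodes_iff)

lemma emb2_in_stack_nodes: "i \<in> nodes n \<Longrightarrow> emb2 i \<in> stack_nodes n"
  by (auto simp: emb2_def stack_nodes_def mem_nodes_iff)

lemma stack_rel_subset:
  assumes "d1 \<in> diagrams n" "d2 \<in> diagrams n"
  shows "stack_rel d1 d2 \<subseteq> stack_nodes n \<times> stack_nodes n"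
  using diagram_block_subset[OF assms(1)] diagram_block_subset[OF assms(2)]
    emb1_in_stack_nodes emb2_in_stack_nodes
  unfolding stack_rel_def by blast

lemma sym_stack_rel: "sym (stack_rel d1 d2)"
  by (auto simp: stack_rel_def sym_def)

lemma stack_rel_emb1: "B \<in> d1 \<Longrightarrow> i \<in> B \<Longrightarrow> j \<in> B \<Longrightarrow> (emb1 i, emb1 j) \<in> (stack_rel d1 d2)\<^sup>*"
  by (rule r_into_rtrancl) (auto simp: stack_rel_def)

lemma stack_rel_emb2: "B \<in> d2 \<Longrightarrow> i \<in> B \<Longrightarrow> j \<in> B \<Longrightarrow> (emb2 i, emb2 j) \<in> (stack_rel d1 d2)\<^sup>*"
  by (rule r_into_rtrancl) (auto simp: stack_rel_def)

lemma partition_stack_comps: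
  assumes "d1 \<in> diagrams n" "d2 \<in> diagrams n"
  shows "partition_on (stack_nodes n) (stack_comps n d1 d2)"
proof -
  let ?S = "stack_nodes n" and ?R = "(stack_rel d1 d2)\<^sup>*"
  have closed: "?R `` {p} \<subseteq> ?S" if "p \<in> ?S" for p
  proof
    fix q assume "q \<in> ?R `` {p}"
    then have "(p, q) \<in> ?R" by simp
    then show "q \<in> ?S"
      by induction (use that stack_rel_subset[OF assms] in auto)
  qed
  have "equiv ?S (?R \<inter> ?S \<times> ?S)"
    by (intro equivI refl_onI sym_Int trans_Int sym_rtrancl[OF sym_stack_rel] trans_rtrancl)
      (auto simp: sym_def trans_def)
  moreover have "?S // (?R \<inter> ?S \<times> ?S) = stack_comps n d1 d2"
    unfolding stack_comps_def quotient_def using closed by blast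
  ultimately show ?thesis
    using partition_on_quotient by metis
qed

lemma unemb_outer_stack_nodes: "unemb ` ({p. fst p \<noteq> 1} \<inter> stack_nodes n) = nodes n"
proof (intro equalityI subsetI)
  fix i assume "i \<in> unemb ` ({p. fst p \<noteq> 1} \<inter> stack_nodes n)"
  then obtain k j where "k \<in> {0, 2}" "j \<in> {1..int n}" "i = unemb (k, j)"
    by (force simp: stack_nodes_def)
  then show "i \<in> nodes n"
    by (auto simp: nodes_def unemb_def)
next
  fix i assume "i \<in> nodes n"
  then consider "- i \<in> {1..int n}" | "i \<in> {1..int n}"
    by (force simp: nodes_def)
  then show "i \<in> unemb ` ({p. fst p \<noteq> 1} \<inter> stack_nodes n)"
  proof cases
    case 1
    then show ?thesis
      by (intro image_eqI[where x = "(0, - i)"]) (auto simp: stack_nodes_def unemb_def)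
  next
    case 2
    then show ?thesis
      by (intro image_eqI[where x = "(2, i)"]) (auto simp: stack_nodes_def unemb_def)
  qed
qed

lemma dcomp_in_diagrams:
  assumes "d1 \<in> diagrams n" "d2 \<in> diagrams n"
  shows "dcomp n d1 d2 \<in> diagrams n"
proof -
  let ?O = "{p. fst p \<noteq> 1}"
  have "partition_on (?O \<inter> stack_nodes n) ((\<inter>) ?O ` stack_comps n d1 d2 - {{}})"
    by (rule partition_on_restrict[OF partition_stack_comps[OF assms]])
  moreover have "inj_on unemb (?O \<inter> stack_nodes n)"
    by (auto simp: inj_on_def unemb_def stack_nodes_def)
  ultimately have "partition_on (unemb ` (?O \<inter> stack_nodes n))
      ((`) unemb ` ((\<inter>) ?O ` stack_comps n d1 d2 - {{}}) - {{}})"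
    by (rule partition_on_inj_image)
  moreover have "(`) unemb ` ((\<inter>) ?O ` stack_comps n d1 d2 - {{}}) - {{}} = dcomp n d1 d2"
    unfolding dcomp_def by (auto simp: Int_commute)
  ultimately show ?thesis
    unfolding diagrams_def using unemb_outer_stack_nodes by (metis mem_Collect_eq)
qed

(* A labelling that is constant on the blocks of both diagrams and connects every node to a root
   of its label has the connected components of the stack as its fibres. *)

locale stack_labelling =
  fixes n :: nat and d1 d2 :: "int set set"
    and label :: "nat \<times> int \<Rightarrow> 'l" and root :: "'l \<Rightarrow> nat \<times> int"
  assumes top_diagram: "d1 \<in> diagrams n" and bottom_diagram: "d2 \<in> diagrams n"
    and label_top: "\<And>B i j. B \<in> d1 \<Longrightarrow> i \<in> B \<Longrightarrow> j \<in> B \<Longrightarrow> label (emb1 i) = label (emb1 j)"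
    and label_bottom: "\<And>B i j. B \<in> d2 \<Longrightarrow> i \<in> B \<Longrightarrow> j \<in> B \<Longrightarrow> label (emb2 i) = label (emb2 j)"
    and connected_root: "\<And>p. p \<in> stack_nodes n \<Longrightarrow> (p, root (label p)) \<in> (stack_rel d1 d2)\<^sup>*"
begin

definition fibre :: "'l \<Rightarrow> (nat \<times> int) set" where
  "fibre l = {q \<in> stack_nodes n. label q = l}"

definition outer_image :: "'l \<Rightarrow> int set" where
  "outer_image l = unemb ` (fibre l \<inter> {p. fst p \<noteq> 1})"

lemma class_eq_fibre:
  assumes p: "p \<in> stack_nodes n"
  shows "(stack_rel d1 d2)\<^sup>* `` {p} = fibre (label p)"
proof (intro equalityI subsetI)
  fix q assume "q \<in> (stack_rel d1 d2)\<^sup>* `` {p}"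
  then have "(p, q) \<in> (stack_rel d1 d2)\<^sup>*" by simp
  then show "q \<in> fibre (label p)"
  proof induction
    case (step u v)
    have "v \<in> stack_nodes n"
      using step.hyps(2) stack_rel_subset[OF top_diagram bottom_diagram] by blast
    moreover have "label u = label v"
      using step.hyps(2) label_top label_bottom unfolding stack_rel_def by blast
    ultimately show ?case
      using step.IH by (simp add: fibre_def)
  qed (use p in \<open>simp add: fibre_def\<close>)
next
  fix q assume q: "q \<in> fibre (label p)"
  then have "q \<in> stack_nodes n" "label q = label p"
    by (auto simp: fibre_def)
  then have "(q, root (label p)) \<in> (stack_rel d1 d2)\<^sup>*"
    using connected_root by metis
  then have "(root (label p), q) \<in> (stack_rel d1 d2)\<^sup>*"
    by (meson sym_rtrancl[OF sym_stack_rel] symD)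
  with connected_root[OF p] show "q \<in> (stack_rel d1 d2)\<^sup>* `` {p}"
    by (meson Image_singleton_iff rtrancl_trans)
qed

lemma stack_comps_eq: "stack_comps n d1 d2 = fibre ` label ` stack_nodes n"
  unfolding stack_comps_def quotient_def using class_eq_fibre by auto

lemma dcomp_eq: "dcomp n d1 d2 = outer_image ` label ` stack_nodes n - {{}}"
  unfolding dcomp_def stack_comps_eq outer_image_def by blast

lemma dloops_eq: "dloops n d1 d2 = card {l \<in> label ` stack_nodes n. outer_image l = {}}"
proof -
  have "inj_on fibre (label ` stack_nodes n)"
    by (rule inj_onI) (auto simp: fibre_def)
  moreover have "{C \<in> stack_comps n d1 d2. C \<subseteq> {p. fst p = 1}}
      = fibre ` {l \<in> label ` stack_nodes n. outer_image l = {}}"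
    unfolding stack_comps_eq outer_image_def by blast
  ultimately show ?thesis
    unfolding dloops_def by (simp add: card_image inj_on_subset)
qed

end

section \<open>Composition with functional diagrams\<close>

(* Right node k lies in the block of the left node -j if \<phi> k = Some j and is a singleton if
   \<phi> k = None; the identity, T_x and T_x V_xy are of this form. *)

definition fun_diagram :: "nat \<Rightarrow> (int \<Rightarrow> int option) \<Rightarrow> int set set" where
  "fun_diagram n \<phi> = (\<lambda>j. insert (- j) {k \<in> {1..int n}. \<phi> k = Some j}) ` {1..int n}
     \<union> (\<lambda>k. {k}) ` {k \<in> {1..int n}. \<phi> k = None}"

(* the block of d (fun_diagram n \<phi>) formed from the block B of d *)
definition fun_block :: "nat \<Rightarrow> (int \<Rightarrow> int option) \<Rightarrow> int set \<Rightarrow> int set" where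
  "fun_block n \<phi> B = {i \<in> B. i < 0} \<union> {k \<in> {1..int n}. \<phi> k \<in> Some ` B}"

lemma fun_diagram_in_diagrams:
  assumes \<phi>: "\<And>k j. k \<in> {1..int n} \<Longrightarrow> \<phi> k = Some j \<Longrightarrow> j \<in> {1..int n}"
  shows "fun_diagram n \<phi> \<in> diagrams n"
  unfolding diagrams_def mem_Collect_eq
proof (rule partition_onI)
  show "\<Union> (fun_diagram n \<phi>) = nodes n"
  proof (intro equalityI subsetI)
    fix i assume "i \<in> \<Union> (fun_diagram n \<phi>)"
    then show "i \<in> nodes n"
      by (auto simp: fun_diagram_def nodes_def)
  next
    fix i assume "i \<in> nodes n"
    then consider "- i \<in> {1..int n}" | "i \<in> {1..int n}" "\<phi> i = None"
      | j where "i \<in> {1..int n}" "\<phi> i = Some j"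
      by (cases "\<phi> i") (force simp: nodes_def)+
    then show "i \<in> \<Union> (fun_diagram n \<phi>)"
    proof cases
      case 1
      then have "insert (- (- i)) {k \<in> {1..int n}. \<phi> k = Some (- i)} \<in> fun_diagram n \<phi>"
        unfolding fun_diagram_def by blast
      then show ?thesis by auto
    next
      case 2
      then show ?thesis unfolding fun_diagram_def by blast
    next
      case 3
      then have "insert (- j) {k \<in> {1..int n}. \<phi> k = Some j} \<in> fun_diagram n \<phi>"
        using \<phi> unfolding fun_diagram_def by blast
      then show ?thesis using 3 by blast
    qed
  qed
next
  show "{} \<notin> fun_diagram n \<phi>"
    by (auto simp: fun_diagram_def)
next
  fix B C assume "B \<in> fun_diagram n \<phi>" "C \<in> fun_diagram n \<phi>" "B \<noteq> C"
  then show "disjnt B C"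
    by (auto simp: fun_diagram_def disjnt_def)
qed

(* A component of the stack of d over fun_diagram n \<phi> is labelled by the block of d it meets, or
   by the right node k if \<phi> k = None. *)

definition fun_comp_label :: "int set set \<Rightarrow> (int \<Rightarrow> int option) \<Rightarrow> nat \<times> int \<Rightarrow> int set + int" where
  "fun_comp_label d \<phi> p =
     (if fst p = 2 then (case \<phi> (snd p) of Some j \<Rightarrow> Inl (block_of d j) | None \<Rightarrow> Inr (snd p))
      else Inl (block_of d (unemb p)))"

definition fun_comp_root :: "int set + int \<Rightarrow> nat \<times> int" where
  "fun_comp_root l = (case l of Inl B \<Rightarrow> emb1 (SOME i. i \<in> B) | Inr k \<Rightarrow> (2, k))"

lemma fun_comp_label_emb1 [simp]: "fun_comp_label d \<phi> (emb1 i) = Inl (block_of d i)"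
  by (simp add: fun_comp_label_def emb1_def unemb_def)

lemma emb1_connected_fun_comp_root:
  assumes d: "d \<in> diagrams n" and i: "i \<in> nodes n"
  shows "(emb1 i, fun_comp_root (Inl (block_of d i))) \<in> (stack_rel d d2)\<^sup>*"
proof -
  have "(SOME j. j \<in> block_of d i) \<in> block_of d i"
    using block_of_mem(2)[OF d i] by (rule someI)
  then show ?thesis
    unfolding fun_comp_root_def
    using stack_rel_emb1 block_of_mem[OF d i] by simp
qed

lemma fun_comp_label_bottom:
  assumes "C \<in> fun_diagram n \<phi>" "i \<in> C" "j \<in> C"
  shows "fun_comp_label d \<phi> (emb2 i) = fun_comp_label d \<phi> (emb2 j)"
proof -
  from assms(1) consider j0 where "C = insert (- j0) {k \<in> {1..int n}. \<phi> k = Some j0}" "j0 \<in> {1..int n}"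
    | k where "C = {k}"
    unfolding fun_diagram_def by blast
  then show ?thesis
  proof cases
    case 1
    then have "fun_comp_label d \<phi> (emb2 l) = Inl (block_of d j0)" if "l \<in> C" for l
      using that by (auto simp: fun_comp_label_def emb2_def unemb_def)
    then show ?thesis
      using assms(2,3) by simp
  qed (use assms in simp)
qed

lemma fun_comp_root_connected:
  assumes d: "d \<in> diagrams n"
    and \<phi>: "\<And>k j. k \<in> {1..int n} \<Longrightarrow> \<phi> k = Some j \<Longrightarrow> j \<in> {1..int n}"
    and p: "p \<in> stack_nodes n"
  shows "(p, fun_comp_root (fun_comp_label d \<phi> p)) \<in> (stack_rel d (fun_diagram n \<phi>))\<^sup>*"
proof (cases "fst p = 2")
  case False
  then show ?thesis
    using emb1_connected_fun_comp_root[OF d unemb_in_nodes[OF p]] emb1_unemb[OF p]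
    by (metis fun_comp_label_emb1)
next
  case True
  then obtain k where p: "p = (2, k)" "k \<in> {1..int n}"
    using p by (cases p) (auto simp: stack_nodes_def)
  show ?thesis
  proof (cases "\<phi> k")
    case None
    then show ?thesis
      by (simp add: p fun_comp_label_def fun_comp_root_def)
  next
    case (Some j)
    then have j: "j \<in> {1..int n}"
      using \<phi> p(2) by blast
    have "insert (- j) {k \<in> {1..int n}. \<phi> k = Some j} \<in> fun_diagram n \<phi>"
      using j unfolding fun_diagram_def by blast
    then have "(emb2 k, emb2 (- j)) \<in> (stack_rel d (fun_diagram n \<phi>))\<^sup>*"
      by (rule stack_rel_emb2) (use p Some in auto)
    moreover have "emb2 k = p" "emb2 (- j) = emb1 j" "j \<in> nodes n"
      using p j by (auto simp: emb1_def emb2_def nodes_def)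
    moreover have "fun_comp_label d \<phi> p = Inl (block_of d j)"
      using p Some by (simp add: fun_comp_label_def)
    ultimately show ?thesis
      using emb1_connected_fun_comp_root[OF d] by (metis rtrancl_trans)
  qed
qed

lemma stack_labelling_fun_diagram:
  assumes d: "d \<in> diagrams n"
    and \<phi>: "\<And>k j. k \<in> {1..int n} \<Longrightarrow> \<phi> k = Some j \<Longrightarrow> j \<in> {1..int n}"
  shows "stack_labelling n d (fun_diagram n \<phi>) (fun_comp_label d \<phi>) fun_comp_root"
proof
  show "fun_diagram n \<phi> \<in> diagrams n"
    using \<phi> by (rule fun_diagram_in_diagrams)
  show "fun_comp_label d \<phi> (emb1 i) = fun_comp_label d \<phi> (emb1 j)" if "B \<in> d" "i \<in> B" "j \<in> B" for B i j
    using that block_of_eq[OF d] by simp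
  show "fun_comp_label d \<phi> (emb2 i) = fun_comp_label d \<phi> (emb2 j)"
    if "C \<in> fun_diagram n \<phi>" "i \<in> C" "j \<in> C" for C i j
    using that by (rule fun_comp_label_bottom)
  show "(p, fun_comp_root (fun_comp_label d \<phi> p)) \<in> (stack_rel d (fun_diagram n \<phi>))\<^sup>*"
    if "p \<in> stack_nodes n" for p
    using d \<phi> that by (rule fun_comp_root_connected)
qed (rule d)

lemma fun_comp_label_mem:
  assumes d: "d \<in> diagrams n"
    and \<phi>: "\<And>k j. k \<in> {1..int n} \<Longrightarrow> \<phi> k = Some j \<Longrightarrow> j \<in> {1..int n}"
    and p: "(m, k) \<in> stack_nodes n"
  shows "fun_comp_label d \<phi> (m, k) \<in> Inl ` d \<union> Inr ` {k \<in> {1..int n}. \<phi> k = None}"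
proof (cases "m = 2")
  case True
  then have k: "k \<in> {1..int n}"
    using p by (simp add: stack_nodes_def)
  show ?thesis
  proof (cases "\<phi> k")
    case None
    then show ?thesis
      using k True by (simp add: fun_comp_label_def)
  next
    case (Some j)
    then have "j \<in> nodes n"
      using \<phi>[OF k] by (simp add: nodes_def)
    then show ?thesis
      using True Some block_of_mem(1)[OF d] by (simp add: fun_comp_label_def)
  qed
next
  case False
  then show ?thesis
    using block_of_mem(1)[OF d unemb_in_nodes[OF p]] by (simp add: fun_comp_label_def)
qed

lemma fun_comp_label_image:
  assumes d: "d \<in> diagrams n"
    and \<phi>: "\<And>k j. k \<in> {1..int n} \<Longrightarrow> \<phi> k = Some j \<Longrightarrow> j \<in> {1..int n}"
  shows "fun_comp_label d \<phi> ` stack_nodes n = Inl ` d \<union> Inr ` {k \<in> {1..int n}. \<phi> k = None}"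
proof (intro equalityI subsetI)
  fix l assume "l \<in> fun_comp_label d \<phi> ` stack_nodes n"
  then obtain m k where "(m, k) \<in> stack_nodes n" "l = fun_comp_label d \<phi> (m, k)"
    by auto
  then show "l \<in> Inl ` d \<union> Inr ` {k \<in> {1..int n}. \<phi> k = None}"
    using fun_comp_label_mem[OF d \<phi>] by simp
next
  fix l assume "l \<in> Inl ` d \<union> Inr ` {k \<in> {1..int n}. \<phi> k = None}"
  then consider B where "B \<in> d" "l = Inl B" | k where "k \<in> {1..int n}" "\<phi> k = None" "l = Inr k"
    by blast
  then show "l \<in> fun_comp_label d \<phi> ` stack_nodes n"
  proof cases
    case 1
    then obtain i where "i \<in> B"
      using diagram_block_nonempty[OF d] by blast
    then have "emb1 i \<in> stack_nodes n" "fun_comp_label d \<phi> (emb1 i) = l"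
      using 1 block_of_eq[OF d] emb1_in_stack_nodes diagram_block_subset[OF d 1(1)] by auto
    then show ?thesis by (metis image_eqI)
  next
    case 2
    then have "(2, k) \<in> stack_nodes n" "fun_comp_label d \<phi> (2, k) = l"
      by (auto simp: stack_nodes_def fun_comp_label_def)
    then show ?thesis by (metis image_eqI)
  qed
qed

context
  fixes n :: nat and d :: "int set set" and \<phi> :: "int \<Rightarrow> int option"
  assumes d: "d \<in> diagrams n"
    and \<phi>: "\<And>k j. k \<in> {1..int n} \<Longrightarrow> \<phi> k = Some j \<Longrightarrow> j \<in> {1..int n}"
begin

interpretation stack_labelling n d "fun_diagram n \<phi>" "fun_comp_label d \<phi>" fun_comp_root
  using d \<phi> by (rule stack_labelling_fun_diagram)

lemma fun_comp_label_eq_Inl_iff: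
  assumes B: "B \<in> d" and q: "q \<in> stack_nodes n" "fst q \<noteq> 1"
  shows "fun_comp_label d \<phi> q = Inl B \<longleftrightarrow> unemb q \<in> fun_block n \<phi> B"
proof -
  obtain m k where qk: "q = (m, k)" "m = 0 \<or> m = 2" "k \<in> {1..int n}"
    using q by (cases q) (auto simp: stack_nodes_def)
  show ?thesis
  proof (cases "m = 0")
    case True
    have "- k \<in> nodes n"
      using qk(3) by (simp add: nodes_def)
    then show ?thesis
      using True qk block_of_eq_iff[OF d B] by (auto simp: fun_comp_label_def unemb_def fun_block_def)
  next
    case False
    show ?thesis
    proof (cases "\<phi> k")
      case (Some j)
      then have "j \<in> nodes n"
        using \<phi>[OF qk(3)] by (simp add: nodes_def)
      then show ?thesis
        using False Some qk block_of_eq_iff[OF d B]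
        by (auto simp: fun_comp_label_def unemb_def fun_block_def image_iff)
    qed (use False qk in \<open>auto simp: fun_comp_label_def unemb_def fun_block_def\<close>)
  qed
qed

lemma fun_block_subset_nodes: "B \<in> d \<Longrightarrow> fun_block n \<phi> B \<subseteq> nodes n"
  using diagram_block_subset[OF d] by (auto simp: fun_block_def nodes_def)

lemma outer_image_fun_comp_Inl:
  assumes B: "B \<in> d"
  shows "outer_image (Inl B) = fun_block n \<phi> B"
proof -
  have "fibre (Inl B) \<inter> {p. fst p \<noteq> 1} = {q \<in> {p. fst p \<noteq> 1} \<inter> stack_nodes n. unemb q \<in> fun_block n \<phi> B}"
    using fun_comp_label_eq_Inl_iff[OF B] by (auto simp: fibre_def)
  then have "outer_image (Inl B) = unemb ` {q \<in> {p. fst p \<noteq> 1} \<inter> stack_nodes n. unemb q \<in> fun_block n \<phi> B}"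
    by (simp add: outer_image_def)
  also have "\<dots> = fun_block n \<phi> B \<inter> unemb ` ({p. fst p \<noteq> 1} \<inter> stack_nodes n)"
    by blast
  finally show ?thesis
    using fun_block_subset_nodes[OF B] unemb_outer_stack_nodes by blast
qed

lemma outer_image_fun_comp_Inr:
  assumes "k \<in> {1..int n}" "\<phi> k = None"
  shows "outer_image (Inr k) = {k}"
proof -
  have "fibre (Inr k) \<inter> {p. fst p \<noteq> 1} = {(2, k)}"
    using assms by (auto simp: fibre_def fun_comp_label_def stack_nodes_def split: option.splits)
  then show ?thesis
    by (simp add: outer_image_def unemb_def)
qed

lemma outer_image_fun_comp_labels:
  "outer_image ` fun_comp_label d \<phi> ` stack_nodes n
     = fun_block n \<phi> ` d \<union> (\<lambda>k. {k}) ` {k \<in> {1..int n}. \<phi> k = None}"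
proof -
  have "outer_image ` fun_comp_label d \<phi> ` stack_nodes n
      = (\<lambda>B. outer_image (Inl B)) ` d \<union> (\<lambda>k. outer_image (Inr k)) ` {k \<in> {1..int n}. \<phi> k = None}"
    by (simp only: fun_comp_label_image[OF d \<phi>] image_Un image_image)
  also have "\<dots> = fun_block n \<phi> ` d \<union> (\<lambda>k. {k}) ` {k \<in> {1..int n}. \<phi> k = None}"
    using outer_image_fun_comp_Inl outer_image_fun_comp_Inr by (intro arg_cong2[where f = "(\<union>)"] image_cong) auto
  finally show ?thesis .
qed

lemma dcomp_fun_diagram:
  "dcomp n d (fun_diagram n \<phi>) = (fun_block n \<phi> ` d - {{}}) \<union> (\<lambda>k. {k}) ` {k \<in> {1..int n}. \<phi> k = None}"
  unfolding dcomp_eq outer_image_fun_comp_labels by blast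

lemma dloops_fun_diagram: "dloops n d (fun_diagram n \<phi>) = card {B \<in> d. fun_block n \<phi> B = {}}"
proof -
  have "{l \<in> fun_comp_label d \<phi> ` stack_nodes n. outer_image l = {}} = Inl ` {B \<in> d. fun_block n \<phi> B = {}}"
    by (simp only: fun_comp_label_image[OF d \<phi>])
      (use outer_image_fun_comp_Inl outer_image_fun_comp_Inr in auto)
  then show ?thesis
    unfolding dloops_eq by (simp add: card_image)
qed

end

section \<open>The diagrams 1, T_x and T_x V_xy\<close>

(* the product T_x V_xy, see dcomp_Tdiag_Vdiag *)
definition TVdiag :: "nat \<Rightarrow> int \<Rightarrow> int \<Rightarrow> int set set" where
  "TVdiag n x y = fun_diagram n (\<lambda>k. Some (if k = x then y else k))"

(* d T_x = insert {x} (detach x d) and d T_x V_xy = attach x y ` detach x d *)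
definition detach :: "int \<Rightarrow> int set set \<Rightarrow> int set set" where
  "detach x d = (\<lambda>B. B - {x}) ` d - {{}}"

definition attach :: "int \<Rightarrow> int \<Rightarrow> int set \<Rightarrow> int set" where
  "attach x y C = (if y \<in> C then insert x C else C)"

lemma idd_eq_fun_diagram: "idd n = fun_diagram n Some"
proof -
  have "(\<lambda>j. insert (- j) {k \<in> {1..int n}. Some k = Some j}) ` {1..int n} = (\<lambda>j. {- j, j}) ` {1..int n}"
    by (rule image_cong) auto
  moreover have "{k \<in> {1..int n}. Some k = None} = {}"
    by simp
  ultimately show ?thesis
    unfolding idd_def fun_diagram_def by blast
qed

lemma Tdiag_eq_fun_diagram:
  assumes x: "x \<in> {1..int n}"
  shows "Tdiag n x = fun_diagram n (\<lambda>k. if k = x then None else Some k)"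
proof -
  let ?\<phi> = "\<lambda>k. if k = x then None else Some k"
  let ?F = "\<lambda>j. insert (- j) {k \<in> {1..int n}. ?\<phi> k = Some j}"
  have "?F ` {1..int n} = insert (?F x) (?F ` ({1..int n} - {x}))"
    using x by blast
  also have "?F ` ({1..int n} - {x}) = (\<lambda>j. {- j, j}) ` ({1..int n} - {x})"
    by (rule image_cong) auto
  also have "?F x = {- x}"
    by auto
  finally have F: "?F ` {1..int n} = insert {- x} ((\<lambda>j. {- j, j}) ` ({1..int n} - {x}))" .
  have N: "{k \<in> {1..int n}. ?\<phi> k = None} = {x}"
    using x by auto
  have "{j. j \<in> {1..int n} \<and> j \<noteq> x} = {1..int n} - {x}"
    by blast
  then have "Tdiag n x = (\<lambda>j. {- j, j}) ` ({1..int n} - {x}) \<union> {{- x}, {x}}"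
    unfolding Tdiag_def setcompr_eq_image by (simp only:)
  then show ?thesis
    unfolding fun_diagram_def F N by auto
qed

lemma idd_in_diagrams: "idd n \<in> diagrams n"
  unfolding idd_eq_fun_diagram by (rule fun_diagram_in_diagrams) simp

lemma Tdiag_in_diagrams: "x \<in> {1..int n} \<Longrightarrow> Tdiag n x \<in> diagrams n"
  unfolding Tdiag_eq_fun_diagram by (rule fun_diagram_in_diagrams) (auto split: if_splits)

lemma TVdiag_in_diagrams: "y \<in> {1..int n} \<Longrightarrow> TVdiag n x y \<in> diagrams n"
  unfolding TVdiag_def by (rule fun_diagram_in_diagrams) (auto split: if_splits)

lemma fun_block_Some: "B \<subseteq> nodes n \<Longrightarrow> fun_block n Some B = B"
  by (auto simp: fun_block_def nodes_def)

lemma fun_block_Tdiag: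
  "B \<subseteq> nodes n \<Longrightarrow> 0 < x \<Longrightarrow> fun_block n (\<lambda>k. if k = x then None else Some k) B = B - {x}"
  by (auto simp: fun_block_def nodes_def split: if_splits)

lemma fun_block_TVdiag:
  assumes "B \<subseteq> nodes n" "x \<in> {1..int n}" "x \<noteq> y"
  shows "fun_block n (\<lambda>k. Some (if k = x then y else k)) B = attach x y (B - {x})"
  using assms by (auto simp: fun_block_def attach_def nodes_def)

lemma card_blocks_within_singleton:
  assumes "d \<in> diagrams n"
  shows "card {B \<in> d. B - {x} = {}} = (if {x} \<in> d then 1 else 0)"
proof -
  have "{B \<in> d. B - {x} = {}} = (if {x} \<in> d then {{x}} else {})"
    using diagram_block_nonempty[OF assms] by (auto simp: subset_singleton_iff)
  then show ?thesis
    by simp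
qed

context
  fixes n :: nat and d :: "int set set"
  assumes d: "d \<in> diagrams n"
begin

lemma dcomp_idd: "dcomp n d (idd n) = d"
proof -
  have "dcomp n d (idd n) = (fun_block n Some ` d - {{}}) \<union> (\<lambda>k. {k}) ` {k \<in> {1..int n}. Some k = None}"
    unfolding idd_eq_fun_diagram by (rule dcomp_fun_diagram[OF d]) simp
  moreover have "fun_block n Some ` d = d"
    using fun_block_Some diagram_block_subset[OF d] by simp
  ultimately show ?thesis
    using diagram_block_nonempty[OF d] by auto
qed

lemma dloops_idd: "dloops n d (idd n) = 0"
proof -
  have "dloops n d (idd n) = card {B \<in> d. fun_block n Some B = {}}"
    unfolding idd_eq_fun_diagram by (rule dloops_fun_diagram[OF d]) simp
  moreover have "fun_block n Some B \<noteq> {}" if "B \<in> d" for B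
    using fun_block_Some[OF diagram_block_subset[OF d that]] diagram_block_nonempty[OF d that] by simp
  then have "{B \<in> d. fun_block n Some B = {}} = {}"
    by blast
  ultimately show ?thesis
    by simp
qed

lemma dcomp_Tdiag:
  assumes x: "x \<in> {1..int n}"
  shows "dcomp n d (Tdiag n x) = insert {x} (detach x d)"
proof -
  let ?\<phi> = "\<lambda>k. if k = x then None else Some k"
  have "dcomp n d (Tdiag n x) = (fun_block n ?\<phi> ` d - {{}}) \<union> (\<lambda>k. {k}) ` {k \<in> {1..int n}. ?\<phi> k = None}"
    unfolding Tdiag_eq_fun_diagram[OF x] by (rule dcomp_fun_diagram[OF d]) (auto split: if_splits)
  moreover have "fun_block n ?\<phi> ` d = (\<lambda>B. B - {x}) ` d"
    using fun_block_Tdiag diagram_block_subset[OF d] x by (intro image_cong) auto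
  moreover have "{k \<in> {1..int n}. ?\<phi> k = None} = {x}"
    using x by auto
  ultimately show ?thesis
    unfolding detach_def by auto
qed

lemma dloops_Tdiag:
  assumes x: "x \<in> {1..int n}"
  shows "dloops n d (Tdiag n x) = (if {x} \<in> d then 1 else 0)"
proof -
  let ?\<phi> = "\<lambda>k. if k = x then None else Some k"
  have "dloops n d (Tdiag n x) = card {B \<in> d. fun_block n ?\<phi> B = {}}"
    unfolding Tdiag_eq_fun_diagram[OF x] by (rule dloops_fun_diagram[OF d]) (auto split: if_splits)
  also have "{B \<in> d. fun_block n ?\<phi> B = {}} = {B \<in> d. B - {x} = {}}"
    using fun_block_Tdiag diagram_block_subset[OF d] x by auto
  finally show ?thesis
    using card_blocks_within_singleton[OF d] by simp
qed

lemma dcomp_TVdiag: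
  assumes x: "x \<in> {1..int n}" and y: "y \<in> {1..int n}" and xy: "x \<noteq> y"
  shows "dcomp n d (TVdiag n x y) = attach x y ` detach x d"
proof -
  let ?\<phi> = "\<lambda>k. Some (if k = x then y else k)"
  have "dcomp n d (TVdiag n x y) = (fun_block n ?\<phi> ` d - {{}}) \<union> (\<lambda>k. {k}) ` {k \<in> {1..int n}. ?\<phi> k = None}"
    unfolding TVdiag_def by (rule dcomp_fun_diagram[OF d]) (use y in auto)
  moreover have "fun_block n ?\<phi> ` d = attach x y ` (\<lambda>B. B - {x}) ` d"
    unfolding image_image using fun_block_TVdiag[OF _ x xy] diagram_block_subset[OF d]
    by (intro image_cong) auto
  moreover have "attach x y ` A - {{}} = attach x y ` (A - {{}})" for A
    by (auto simp: attach_def)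
  ultimately show ?thesis
    unfolding detach_def by simp
qed

lemma dloops_TVdiag:
  assumes x: "x \<in> {1..int n}" and y: "y \<in> {1..int n}" and xy: "x \<noteq> y"
  shows "dloops n d (TVdiag n x y) = (if {x} \<in> d then 1 else 0)"
proof -
  let ?\<phi> = "\<lambda>k. Some (if k = x then y else k)"
  have "dloops n d (TVdiag n x y) = card {B \<in> d. fun_block n ?\<phi> B = {}}"
    unfolding TVdiag_def by (rule dloops_fun_diagram[OF d]) (use y in auto)
  also have "{B \<in> d. fun_block n ?\<phi> B = {}} = {B \<in> d. B - {x} = {}}"
    using fun_block_TVdiag[OF diagram_block_subset[OF d] x xy] by (intro Collect_cong) (auto simp: attach_def split: if_splits)
  finally show ?thesis
    using card_blocks_within_singleton[OF d] by simp
qed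

end

lemma Vdiag_in_diagrams:
  assumes x: "x \<in> {1..int n}" and y: "y \<in> {1..int n}"
  shows "Vdiag n x y \<in> diagrams n"
  unfolding diagrams_def mem_Collect_eq
proof (rule partition_onI)
  show "\<Union> (Vdiag n x y) = nodes n"
  proof (intro equalityI subsetI)
    fix i assume "i \<in> \<Union> (Vdiag n x y)"
    then show "i \<in> nodes n"
      using x y by (auto simp: Vdiag_def nodes_def)
  next
    fix i assume "i \<in> nodes n"
    then have i: "\<bar>i\<bar> \<in> {1..int n}" "i \<in> {- \<bar>i\<bar>, \<bar>i\<bar>}"
      by (auto simp: nodes_def)
    show "i \<in> \<Union> (Vdiag n x y)"
    proof (cases "\<bar>i\<bar> = x \<or> \<bar>i\<bar> = y")
      case True
      then show ?thesis using i by (auto simp: Vdiag_def)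
    next
      case False
      then show ?thesis using i unfolding Vdiag_def by blast
    qed
  qed
next
  show "{} \<notin> Vdiag n x y"
    by (auto simp: Vdiag_def)
next
  fix B C assume "B \<in> Vdiag n x y" "C \<in> Vdiag n x y" "B \<noteq> C"
  then show "disjnt B C"
    using x y by (auto simp: Vdiag_def disjnt_def)
qed

context
  fixes n :: nat and x y :: int
  assumes x: "x \<in> {1..int n}" and y: "y \<in> {1..int n}" and xy: "x \<noteq> y"
begin

(* In the stack of T_x over V_xy the column j forms a component, except that the left node -x is
   isolated and the rest of column x joins column y. *)

definition TV_label :: "nat \<times> int \<Rightarrow> int" where
  "TV_label p = (if snd p = x \<and> fst p \<noteq> 0 then y else snd p)"

definition TV_root :: "int \<Rightarrow> nat \<times> int" where
  "TV_root j = (if j = x then (0, x) else (2, j))"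

lemma TV_label_top:
  assumes "B \<in> Tdiag n x" "i \<in> B" "j \<in> B"
  shows "TV_label (emb1 i) = TV_label (emb1 j)"
proof -
  from assms(1) consider k where "B = {- k, k}" "k \<in> {1..int n}" "k \<noteq> x" | "B = {- x}" | "B = {x}"
    unfolding Tdiag_def by blast
  then show ?thesis
  proof cases
    case 1
    then have "TV_label (emb1 l) = k" if "l \<in> B" for l
      using that by (auto simp: TV_label_def emb1_def)
    then show ?thesis
      using assms(2,3) by simp
  qed (use assms in auto)
qed

lemma TV_label_bottom:
  assumes "B \<in> Vdiag n x y" "i \<in> B" "j \<in> B"
  shows "TV_label (emb2 i) = TV_label (emb2 j)"
proof -
  from assms(1) consider k where "B = {- k, k}" "k \<in> {1..int n}" "k \<noteq> x" "k \<noteq> y"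
    | "B = {- x, - y, x, y}"
    unfolding Vdiag_def by blast
  then have "\<exists>c. \<forall>l \<in> B. TV_label (emb2 l) = c"
  proof cases
    case 1
    then show ?thesis by (auto simp: TV_label_def emb2_def)
  next
    case 2
    then show ?thesis using x y by (auto simp: TV_label_def emb2_def)
  qed
  then show ?thesis
    using assms(2,3) by metis
qed

lemma TV_middle_connected:
  assumes j: "j \<in> {1..int n}"
  shows "((1, j), (2, if j = x then y else j)) \<in> (stack_rel (Tdiag n x) (Vdiag n x y))\<^sup>*"
proof (cases "j = x \<or> j = y")
  case True
  have "{- x, - y, x, y} \<in> Vdiag n x y"
    by (simp add: Vdiag_def)
  then have "(emb2 (- j), emb2 y) \<in> (stack_rel (Tdiag n x) (Vdiag n x y))\<^sup>*"
    by (rule stack_rel_emb2) (use True in auto)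
  then show ?thesis
    using True j y by (auto simp: emb2_def)
next
  case False
  then have "{- j, j} \<in> Vdiag n x y"
    using j by (auto simp: Vdiag_def)
  then have "(emb2 (- j), emb2 j) \<in> (stack_rel (Tdiag n x) (Vdiag n x y))\<^sup>*"
    by (rule stack_rel_emb2) auto
  then show ?thesis
    using False j by (auto simp: emb2_def)
qed

lemma TV_top_connected:
  assumes j: "j \<in> {1..int n}" "j \<noteq> x"
  shows "((0, j), (1, j)) \<in> (stack_rel (Tdiag n x) (Vdiag n x y))\<^sup>*"
proof -
  have "{- j, j} \<in> Tdiag n x"
    using j by (auto simp: Tdiag_def)
  then have "(emb1 (- j), emb1 j) \<in> (stack_rel (Tdiag n x) (Vdiag n x y))\<^sup>*"
    by (rule stack_rel_emb1) auto
  then show ?thesis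
    using j by (auto simp: emb1_def)
qed

lemma TV_root_connected:
  assumes "p \<in> stack_nodes n"
  shows "(p, TV_root (TV_label p)) \<in> (stack_rel (Tdiag n x) (Vdiag n x y))\<^sup>*"
proof -
  obtain m j where p: "p = (m, j)" "m \<in> {0, 1, 2}" "j \<in> {1..int n}"
    using assms by (auto simp: stack_nodes_def)
  consider "m = 0" "j = x" | "m = 0" "j \<noteq> x" | "m = 1" | "m = 2"
    using p(2) by blast
  then show ?thesis
  proof cases
    case 2
    then show ?thesis
      using TV_top_connected[OF p(3) 2(2)] TV_middle_connected[OF p(3)] p(1)
      by (auto simp: TV_label_def TV_root_def intro: rtrancl_trans)
  next
    case 3
    then show ?thesis
      using TV_middle_connected[OF p(3)] p(1) xy by (auto simp: TV_label_def TV_root_def)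
  next
    case 4
    have "{- x, - y, x, y} \<in> Vdiag n x y"
      by (simp add: Vdiag_def)
    then have "(emb2 x, emb2 y) \<in> (stack_rel (Tdiag n x) (Vdiag n x y))\<^sup>*"
      by (rule stack_rel_emb2) auto
    then show ?thesis
      using 4 p(1) x y xy by (auto simp: TV_label_def TV_root_def emb2_def)
  qed (simp add: p TV_label_def TV_root_def)
qed

lemma stack_labelling_TV: "stack_labelling n (Tdiag n x) (Vdiag n x y) TV_label TV_root"
proof
  show "Tdiag n x \<in> diagrams n" "Vdiag n x y \<in> diagrams n"
    using Tdiag_in_diagrams[OF x] Vdiag_in_diagrams[OF x y] .
qed (fact TV_label_top TV_label_bottom TV_root_connected)+

interpretation TV: stack_labelling n "Tdiag n x" "Vdiag n x y" TV_label TV_root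
  by (rule stack_labelling_TV)

lemma TV_label_image: "TV_label ` stack_nodes n = {1..int n}"
proof (intro equalityI subsetI)
  fix l assume "l \<in> TV_label ` stack_nodes n"
  then show "l \<in> {1..int n}"
    using y by (auto simp: TV_label_def stack_nodes_def)
next
  fix j assume "j \<in> {1..int n}"
  then have "(0, j) \<in> stack_nodes n" "TV_label (0, j) = j"
    by (auto simp: stack_nodes_def TV_label_def)
  then show "j \<in> TV_label ` stack_nodes n"
    by (metis image_eqI)
qed

lemma outer_image_TV:
  assumes j: "j \<in> {1..int n}"
  shows "TV.outer_image j = insert (- j) {k \<in> {1..int n}. Some (if k = x then y else k) = Some j}"
proof -
  have outer: "TV.fibre j \<inter> {p. fst p \<noteq> 1} = insert (0, j) (Pair 2 ` {k \<in> {1..int n}. (if k = x then y else k) = j})"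
    using j by (auto simp: TV.fibre_def TV_label_def stack_nodes_def)
  show ?thesis
    unfolding TV.outer_image_def outer image_insert image_image by (simp add: unemb_def)
qed

lemma dcomp_Tdiag_Vdiag: "dcomp n (Tdiag n x) (Vdiag n x y) = TVdiag n x y"
proof -
  have "TV.outer_image ` TV_label ` stack_nodes n
      = (\<lambda>j. insert (- j) {k \<in> {1..int n}. Some (if k = x then y else k) = Some j}) ` {1..int n}"
    unfolding TV_label_image using outer_image_TV by (rule image_cong[OF refl])
  then show ?thesis
    unfolding TV.dcomp_eq TVdiag_def fun_diagram_def by auto
qed

lemma dloops_Tdiag_Vdiag: "dloops n (Tdiag n x) (Vdiag n x y) = 0"
proof -
  have no_loops: "{l \<in> TV_label ` stack_nodes n. TV.outer_image l = {}} = {}"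
    unfolding TV_label_image using outer_image_TV by auto
  show ?thesis
    unfolding TV.dloops_eq by (subst no_loops) simp
qed

end

section \<open>The partition algebra as a module\<close>

lemma psub_eq_minus: "psub f g = f - g"
  by (simp add: psub_def fun_eq_iff)

lemma padd_eq_plus: "padd f g = f + g"
  by (simp add: padd_def fun_eq_iff)

lemma sum_fun_apply: "(\<Sum>a\<in>A. f a) x = (\<Sum>a\<in>A. f a x)"
  by (induction A rule: infinite_finite_induct) simp_all

interpretation fun_module: module "\<lambda>r (f :: 'a \<Rightarrow> 'r::comm_ring_1). \<lambda>e. r * f e"
  by standard (simp_all add: fun_eq_iff algebra_simps)

lemma rspan_eq_span: "rspan S = fun_module.span S"
  unfolding rspan_def fun_module.span_explicit
  by (auto simp: fun_eq_iff sum_fun_apply)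

definition pushforward :: "'a set \<Rightarrow> ('a \<Rightarrow> 'b) \<Rightarrow> ('a \<Rightarrow> 'r::comm_ring_1) \<Rightarrow> 'b \<Rightarrow> 'r" where
  "pushforward A \<phi> c f = (\<Sum>d\<in>A. if \<phi> d = f then c d else 0)"

lemma pushforward_nonzero:
  assumes "pushforward A \<phi> c f \<noteq> 0"
  shows "\<exists>d\<in>A. \<phi> d = f \<and> c d \<noteq> 0"
proof (rule ccontr)
  assume "\<not> ?thesis"
  then have "pushforward A \<phi> c f = 0"
    unfolding pushforward_def by (intro sum.neutral) auto
  with assms show False ..
qed

lemma pushforward_id:
  assumes "finite A" "\<And>d. d \<notin> A \<Longrightarrow> c d = 0"
  shows "pushforward A (\<lambda>d. d) c = c"
proof
  fix f
  show "pushforward A (\<lambda>d. d) c f = c f"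
    unfolding pushforward_def using assms by (simp add: sum.delta')
qed

lemma pushforward_at_cong:
  assumes "\<And>d. d \<in> A \<Longrightarrow> \<phi> d = \<phi> d0 \<longleftrightarrow> \<psi> d = \<psi> d0"
  shows "pushforward A \<phi> c (\<phi> d0) = pushforward A \<psi> c (\<psi> d0)"
  unfolding pushforward_def using assms by (simp cong: sum.cong)

lemma pushforward_pushforward:
  assumes A: "finite A" and \<phi>: "\<And>d. d \<in> A \<Longrightarrow> \<phi> d \<in> A"
  shows "pushforward A \<psi> (\<lambda>e. pushforward A \<phi> c e * w e) = pushforward A (\<lambda>d. \<psi> (\<phi> d)) (\<lambda>d. c d * w (\<phi> d))"
proof
  fix f
  have "pushforward A \<psi> (\<lambda>e. pushforward A \<phi> c e * w e) f
      = (\<Sum>e\<in>A. \<Sum>d\<in>A. if \<phi> d = e \<and> \<psi> e = f then c d * w e else 0)"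
    unfolding pushforward_def sum_distrib_right by (rule sum.cong[OF refl]) (auto intro!: sum.cong)
  also have "\<dots> = (\<Sum>d\<in>A. \<Sum>e\<in>A. if \<phi> d = e \<and> \<psi> e = f then c d * w e else 0)"
    by (rule sum.swap)
  also have "\<dots> = (\<Sum>d\<in>A. if \<psi> (\<phi> d) = f then c d * w (\<phi> d) else 0)"
  proof (rule sum.cong[OF refl])
    fix d assume "d \<in> A"
    have "(\<Sum>e\<in>A. if \<phi> d = e \<and> \<psi> e = f then c d * w e else 0)
        = (\<Sum>e\<in>A. if \<phi> d = e then (if \<psi> (\<phi> d) = f then c d * w (\<phi> d) else 0) else 0)"
      by (rule sum.cong) auto
    then show "(\<Sum>e\<in>A. if \<phi> d = e \<and> \<psi> e = f then c d * w e else 0)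
        = (if \<psi> (\<phi> d) = f then c d * w (\<phi> d) else 0)"
      using A \<phi>[OF \<open>d \<in> A\<close>] by (simp add: sum.delta)
  qed
  finally show "pushforward A \<psi> (\<lambda>e. pushforward A \<phi> c e * w e) f
      = pushforward A (\<lambda>d. \<psi> (\<phi> d)) (\<lambda>d. c d * w (\<phi> d)) f"
    by (simp add: pushforward_def)
qed

lemma basis_in_palg: "d \<in> diagrams n \<Longrightarrow> basis d \<in> palg n"
  by (simp add: basis_def palg_def)

lemma palg_eq_sum_basis:
  assumes "a \<in> palg n"
  shows "a = (\<Sum>d\<in>diagrams n. (\<lambda>e. a d * basis d e))"
proof
  fix f
  have "(\<Sum>d\<in>diagrams n. a d * basis d f) = (\<Sum>d\<in>diagrams n. if d = f then a d else 0)"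
    by (rule sum.cong) (simp_all add: basis_def)
  also have "\<dots> = a f"
    using assms finite_diagrams by (simp add: sum.delta' palg_def)
  finally show "a f = (\<Sum>d\<in>diagrams n. (\<lambda>e. a d * basis d e)) f"
    by (simp add: sum_fun_apply)
qed

lemma pmult_in_palg: "pmult n \<delta> a b \<in> palg n"
  unfolding palg_def pmult_def using dcomp_in_diagrams by (auto intro!: sum.neutral)

lemma pmult_basis_right:
  assumes m: "m \<in> diagrams n"
  shows "pmult n \<delta> a (basis m) = pushforward (diagrams n) (\<lambda>d. dcomp n d m) (\<lambda>d. a d * \<delta> ^ dloops n d m)"
proof
  fix f
  have "(\<Sum>d2\<in>diagrams n. if dcomp n d1 d2 = f then a d1 * basis m d2 * \<delta> ^ dloops n d1 d2 else 0)
      = (if dcomp n d1 m = f then a d1 * \<delta> ^ dloops n d1 m else 0)" for d1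
  proof -
    have "(\<Sum>d2\<in>diagrams n. if dcomp n d1 d2 = f then a d1 * basis m d2 * \<delta> ^ dloops n d1 d2 else 0)
        = (\<Sum>d2\<in>diagrams n. if d2 = m then (if dcomp n d1 m = f then a d1 * \<delta> ^ dloops n d1 m else 0) else 0)"
      by (rule sum.cong) (auto simp: basis_def)
    then show ?thesis
      using m finite_diagrams by simp
  qed
  then show "pmult n \<delta> a (basis m) f = pushforward (diagrams n) (\<lambda>d. dcomp n d m) (\<lambda>d. a d * \<delta> ^ dloops n d m) f"
    unfolding pmult_def pushforward_def by simp
qed

lemma pmult_basis_basis:
  assumes "p \<in> diagrams n" "m \<in> diagrams n"
  shows "pmult n \<delta> (basis p) (basis m) = (\<lambda>f. if dcomp n p m = f then \<delta> ^ dloops n p m else 0)"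
proof
  fix f
  have "pushforward (diagrams n) (\<lambda>d. dcomp n d m) (\<lambda>d. basis p d * \<delta> ^ dloops n d m) f
      = (\<Sum>d\<in>diagrams n. if d = p then (if dcomp n p m = f then \<delta> ^ dloops n p m else 0) else 0)"
    unfolding pushforward_def by (rule sum.cong) (auto simp: basis_def)
  then show "pmult n \<delta> (basis p) (basis m) f = (if dcomp n p m = f then \<delta> ^ dloops n p m else 0)"
    using assms finite_diagrams by (simp add: pmult_basis_right)
qed

lemma pmult_idd:
  assumes "a \<in> palg n"
  shows "pmult n \<delta> a (basis (idd n)) = a"
proof -
  have "pmult n \<delta> a (basis (idd n)) = pushforward (diagrams n) (\<lambda>d. d) a"
    unfolding pmult_basis_right[OF idd_in_diagrams] pushforward_def
    by (intro ext sum.cong) (auto simp: dcomp_idd dloops_idd)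
  also have "\<dots> = a"
    using assms finite_diagrams by (intro pushforward_id) (auto simp: palg_def)
  finally show ?thesis .
qed

lemma pmult_diff_left: "pmult n \<delta> (a - b) m = pmult n \<delta> a m - pmult n \<delta> b m"
proof
  fix f
  have "(if dcomp n d1 d2 = f then (a - b) d1 * m d2 * \<delta> ^ dloops n d1 d2 else 0)
      = (if dcomp n d1 d2 = f then a d1 * m d2 * \<delta> ^ dloops n d1 d2 else 0)
        - (if dcomp n d1 d2 = f then b d1 * m d2 * \<delta> ^ dloops n d1 d2 else 0)" for d1 d2
    by (simp add: left_diff_distrib)
  then show "pmult n \<delta> (a - b) m f = (pmult n \<delta> a m - pmult n \<delta> b m) f"
    unfolding pmult_def minus_apply by (simp only: sum_subtractf)
qed

lemma pmult_diff_right: "pmult n \<delta> a (u - v) = pmult n \<delta> a u - pmult n \<delta> a v"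
proof
  fix f
  have "(if dcomp n d1 d2 = f then a d1 * (u - v) d2 * \<delta> ^ dloops n d1 d2 else 0)
      = (if dcomp n d1 d2 = f then a d1 * u d2 * \<delta> ^ dloops n d1 d2 else 0)
        - (if dcomp n d1 d2 = f then a d1 * v d2 * \<delta> ^ dloops n d1 d2 else 0)" for d1 d2
    by (simp add: left_diff_distrib right_diff_distrib)
  then show "pmult n \<delta> a (u - v) f = (pmult n \<delta> a u - pmult n \<delta> a v) f"
    unfolding pmult_def minus_apply by (simp only: sum_subtractf)
qed

lemma pmult_eq_sum_basis_left: "pmult n \<delta> a b = (\<Sum>d\<in>diagrams n. (\<lambda>e. a d * pmult n \<delta> (basis d) b e))"
proof
  fix f
  let ?S = "\<lambda>d1. \<Sum>d2\<in>diagrams n. if dcomp n d1 d2 = f then b d2 * \<delta> ^ dloops n d1 d2 else 0"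
  have "pmult n \<delta> (basis d) b f = (\<Sum>d1\<in>diagrams n. if d1 = d then ?S d1 else 0)" for d
    unfolding pmult_def
  proof (rule sum.cong[OF refl])
    fix d1
    show "(\<Sum>d2\<in>diagrams n. if dcomp n d1 d2 = f then basis d d1 * b d2 * \<delta> ^ dloops n d1 d2 else 0)
        = (if d1 = d then ?S d1 else 0)"
      by (cases "d1 = d") (simp_all add: basis_def cong: if_cong)
  qed
  then have "a d * pmult n \<delta> (basis d) b f
      = (\<Sum>d2\<in>diagrams n. if dcomp n d d2 = f then a d * b d2 * \<delta> ^ dloops n d d2 else 0)"
    if "d \<in> diagrams n" for d
    using that finite_diagrams by (simp add: sum_distrib_left mult.assoc if_distrib[where f = "\<lambda>t. a d * t"] cong: if_cong)
  then show "pmult n \<delta> a b f = (\<Sum>d\<in>diagrams n. (\<lambda>e. a d * pmult n \<delta> (basis d) b e)) f"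
    unfolding sum_fun_apply pmult_def by (intro sum.cong) auto
qed

section \<open>Right multiplication by T_x and T_x V_xy\<close>

lemma pushforward_cong:
  assumes "\<And>d. d \<in> A \<Longrightarrow> c d = c' d" "\<And>d. d \<in> A \<Longrightarrow> c d \<noteq> 0 \<Longrightarrow> \<phi> d = \<phi>' d"
  shows "pushforward A \<phi> c = pushforward A \<phi>' c'"
proof
  fix f
  have "(if \<phi> d = f then c d else 0) = (if \<phi>' d = f then c' d else 0)" if "d \<in> A" for d
    using assms[OF that] by (cases "c d = 0") auto
  then show "pushforward A \<phi> c f = pushforward A \<phi>' c' f"
    unfolding pushforward_def by (rule sum.cong[OF refl])
qed

lemma detach_mem: "C \<in> detach x d \<Longrightarrow> x \<notin> C \<and> C \<noteq> {}"
  by (auto simp: detach_def)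

lemma image_remove_detach: "(\<lambda>B. B - {x}) ` detach x d = detach x d"
proof -
  have "(\<lambda>B. B - {x}) ` detach x d = (\<lambda>B. B) ` detach x d"
    by (rule image_cong) (use detach_mem in auto)
  then show ?thesis
    by simp
qed

lemma detach_insert_detach: "detach x (insert {x} (detach x d)) = detach x d"
  using detach_mem[of "{}" x d] unfolding detach_def[of x "insert {x} (detach x d)"] image_insert image_remove_detach
  by auto

lemma detach_attach_detach: "detach x (attach x y ` detach x d) = detach x d"
proof -
  have "(\<lambda>C. attach x y C - {x}) ` detach x d = (\<lambda>C. C) ` detach x d"
    by (rule image_cong) (use detach_mem in \<open>auto simp: attach_def\<close>)
  then show ?thesis
    using detach_mem[of "{}" x d] unfolding detach_def[of x "attach x y ` detach x d"] image_image
    by auto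
qed

lemma singleton_notin_attach_detach: "{x} \<notin> attach x y ` detach x d"
proof
  assume "{x} \<in> attach x y ` detach x d"
  then obtain C where C: "C \<in> detach x d" "attach x y C = {x}"
    by blast
  then have "C \<subseteq> {x}"
    by (auto simp: attach_def split: if_splits)
  then show False
    using detach_mem[OF C(1)] by blast
qed

lemma insert_detach_eq_iff: "insert {x} (detach x d) = insert {x} (detach x d0) \<longleftrightarrow> detach x d = detach x d0"
proof
  assume "insert {x} (detach x d) = insert {x} (detach x d0)"
  then have "detach x (insert {x} (detach x d)) = detach x (insert {x} (detach x d0))"
    by simp
  then show "detach x d = detach x d0"
    by (simp only: detach_insert_detach)
qed simp

lemma attach_detach_eq_iff: "attach x y ` detach x d = attach x y ` detach x d0 \<longleftrightarrow> detach x d = detach x d0"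
proof
  assume "attach x y ` detach x d = attach x y ` detach x d0"
  then have "detach x (attach x y ` detach x d) = detach x (attach x y ` detach x d0)"
    by simp
  then show "detach x d = detach x d0"
    by (simp only: detach_attach_detach)
qed simp

lemma insert_detach_eq:
  assumes d: "d \<in> diagrams n" and x: "{x} \<in> d"
  shows "insert {x} (detach x d) = d"
proof (intro equalityI subsetI)
  have x_notin: "x \<notin> B" if "B \<in> d" "B \<noteq> {x}" for B
    using block_of_eq[OF d that(1)] block_of_eq[OF d x] that by fastforce
  fix C
  show "C \<in> d" if "C \<in> insert {x} (detach x d)"
  proof (cases "C = {x}")
    case False
    then have "C \<in> detach x d"
      using that by simp
    then obtain B where "B \<in> d" "C = B - {x}" "C \<noteq> {}"
      unfolding detach_def by blast
    then show ?thesis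
      using x_notin by (metis Diff_empty Diff_insert0 Diff_cancel)
  qed (use x in simp)
  show "C \<in> insert {x} (detach x d)" if "C \<in> d"
  proof (cases "C = {x}")
    case False
    then have "C = C - {x}" "C \<noteq> {}"
      using x_notin[OF that] diagram_block_nonempty[OF d that] by auto
    then show ?thesis
      using that unfolding detach_def by blast
  qed simp
qed

lemma jdiagI_singleton: "z \<in> Z \<Longrightarrow> {z} \<in> r \<Longrightarrow> jdiag Z r"
  unfolding jdiag_def by blast

lemma jdiagI_pair: "z1 \<in> Z \<Longrightarrow> z2 \<in> Z \<Longrightarrow> z1 \<noteq> z2 \<Longrightarrow> B \<in> r \<Longrightarrow> z1 \<in> B \<Longrightarrow> z2 \<in> B \<Longrightarrow> jdiag Z r"
  unfolding jdiag_def by blast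

lemma jdiagE:
  assumes "jdiag Z r"
  obtains z where "z \<in> Z" "{z} \<in> r"
    | z1 z2 B where "z1 \<in> Z" "z2 \<in> Z" "z1 \<noteq> z2" "B \<in> r" "z1 \<in> B" "z2 \<in> B"
  using assms unfolding jdiag_def by blast

lemma jdiag_insert_singleton_iff:
  assumes "x \<notin> Z"
  shows "jdiag Z (insert {x} r) \<longleftrightarrow> jdiag Z r"
proof
  assume "jdiag Z (insert {x} r)"
  then show "jdiag Z r"
  proof (cases rule: jdiagE)
    case (1 z)
    then show ?thesis using assms by (auto intro: jdiagI_singleton)
  next
    case (2 z1 z2 B)
    then have "B \<noteq> {x}" by auto
    then show ?thesis using 2 by (auto intro: jdiagI_pair)
  qed
qed (auto simp: jdiag_def)

lemma jdiag_attach_iff: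
  assumes "x \<notin> Z" "y \<notin> Z"
  shows "jdiag Z (attach x y ` r) \<longleftrightarrow> jdiag Z r"
proof
  assume "jdiag Z (attach x y ` r)"
  then show "jdiag Z r"
  proof (cases rule: jdiagE)
    case (1 z)
    then obtain C where C: "C \<in> r" "attach x y C = {z}" by auto
    have "y \<notin> C"
      using C(2) 1(1) assms by (auto simp: attach_def)
    then have "C = {z}"
      using C(2) by (simp add: attach_def)
    then show ?thesis using 1 C(1) by (auto intro: jdiagI_singleton)
  next
    case (2 z1 z2 B)
    then obtain C where C: "C \<in> r" "B = attach x y C" by auto
    have "z1 \<in> C" "z2 \<in> C"
      using 2 C(2) assms(1) by (auto simp: attach_def split: if_splits)
    then show ?thesis using 2 C(1) by (auto intro: jdiagI_pair)
  qed
next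
  assume "jdiag Z r"
  then show "jdiag Z (attach x y ` r)"
  proof (cases rule: jdiagE)
    case (1 z)
    then have "attach x y {z} = {z}"
      using assms(2) by (auto simp: attach_def)
    then show ?thesis using 1 by (metis image_eqI jdiagI_singleton)
  next
    case (2 z1 z2 B)
    then have "z1 \<in> attach x y B" "z2 \<in> attach x y B" "attach x y B \<in> attach x y ` r"
      by (auto simp: attach_def)
    then show ?thesis using 2 by (auto intro: jdiagI_pair)
  qed
qed

lemma jdiag_detach:
  assumes "x \<notin> Z" "jdiag Z d"
  shows "jdiag Z (detach x d)"
  using assms(2)
proof (cases rule: jdiagE)
  case (1 z)
  then have "{z} - {x} \<in> (\<lambda>B. B - {x}) ` d" "{z} - {x} = {z}"
    using assms(1) by auto
  then have "{z} \<in> detach x d"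
    unfolding detach_def by auto
  then show ?thesis using 1 by (auto intro: jdiagI_singleton)
next
  case (2 z1 z2 B)
  then have "B - {x} \<in> detach x d" "z1 \<in> B - {x}" "z2 \<in> B - {x}"
    using assms(1) unfolding detach_def by auto
  then show ?thesis using 2 by (auto intro: jdiagI_pair)
qed

lemma pmult_Tdiag:
  assumes x: "x \<in> {1..int n}"
  shows "pmult n \<delta> a (basis (Tdiag n x))
     = pushforward (diagrams n) (\<lambda>d. insert {x} (detach x d)) (\<lambda>d. a d * \<delta> ^ (if {x} \<in> d then 1 else 0))"
  unfolding pmult_basis_right[OF Tdiag_in_diagrams[OF x]]
  by (rule pushforward_cong) (simp_all add: dcomp_Tdiag[OF _ x] dloops_Tdiag[OF _ x])

lemma pmult_Tdiag_in_Aspan: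
  assumes x: "x \<in> {1..int n}"
  shows "pmult n \<delta> a (basis (Tdiag n x)) \<in> Aspan n x"
proof -
  have "{x} \<in> f" if nz: "pmult n \<delta> a (basis (Tdiag n x)) f \<noteq> 0" for f
  proof -
    obtain d where "insert {x} (detach x d) = f"
      using pushforward_nonzero[OF nz[unfolded pmult_Tdiag[OF x]]] by blast
    then show ?thesis by blast
  qed
  then show ?thesis
    using pmult_in_palg by (simp add: Aspan_def)
qed

context
  fixes n :: nat and x y :: int
  assumes x: "x \<in> {1..int n}" and y: "y \<in> {1..int n}" and xy: "x \<noteq> y"
begin

lemma pmult_TVdiag:
  "pmult n \<delta> a (basis (TVdiag n x y))
     = pushforward (diagrams n) (\<lambda>d. attach x y ` detach x d) (\<lambda>d. a d * \<delta> ^ (if {x} \<in> d then 1 else 0))"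
  unfolding pmult_basis_right[OF TVdiag_in_diagrams[OF y]]
  by (rule pushforward_cong) (simp_all add: dcomp_TVdiag[OF _ x y xy] dloops_TVdiag[OF _ x y xy])

lemma attach_detach_in_diagrams: "d \<in> diagrams n \<Longrightarrow> attach x y ` detach x d \<in> diagrams n"
  using dcomp_in_diagrams[OF _ TVdiag_in_diagrams[OF y]] dcomp_TVdiag[OF _ x y xy] by metis

lemma pmult_TVdiag_idem:
  "pmult n \<delta> (pmult n \<delta> b (basis (TVdiag n x y))) (basis (TVdiag n x y)) = pmult n \<delta> b (basis (TVdiag n x y))"
  unfolding pmult_TVdiag
  by (subst pushforward_pushforward[OF finite_diagrams attach_detach_in_diagrams])
    (auto intro!: pushforward_cong simp: detach_attach_detach singleton_notin_attach_detach)

(* both sides sum the coefficients of a over the diagrams d with detach x d = detach x d0 *)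
lemma pmult_Tdiag_at_eq_pmult_TVdiag_at:
  "pmult n \<delta> a (basis (Tdiag n x)) (insert {x} (detach x d0))
     = pmult n \<delta> a (basis (TVdiag n x y)) (attach x y ` detach x d0)"
  unfolding pmult_Tdiag[OF x] pmult_TVdiag
  by (rule pushforward_at_cong) (simp only: insert_detach_eq_iff attach_detach_eq_iff)

lemma pmult_Tdiag_in_Jideal_iff:
  assumes Z: "x \<notin> Z" "y \<notin> Z"
  shows "pmult n \<delta> a (basis (Tdiag n x)) \<in> Jideal n Z \<longleftrightarrow> pmult n \<delta> a (basis (TVdiag n x y)) \<in> Jideal n Z"
proof
  assume T: "pmult n \<delta> a (basis (Tdiag n x)) \<in> Jideal n Z"
  have "jdiag Z f" if nz: "pmult n \<delta> a (basis (TVdiag n x y)) f \<noteq> 0" for f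
  proof -
    obtain d where f: "f = attach x y ` detach x d"
      using pushforward_nonzero[OF nz[unfolded pmult_TVdiag]] by blast
    then have "pmult n \<delta> a (basis (Tdiag n x)) (insert {x} (detach x d)) \<noteq> 0"
      using nz unfolding pmult_Tdiag_at_eq_pmult_TVdiag_at by simp
    then have "jdiag Z (insert {x} (detach x d))"
      using T by (simp add: Jideal_def)
    then have "jdiag Z (detach x d)"
      using jdiag_insert_singleton_iff[OF Z(1)] by blast
    then show ?thesis
      using jdiag_attach_iff[OF Z] f by blast
  qed
  then show "pmult n \<delta> a (basis (TVdiag n x y)) \<in> Jideal n Z"
    using pmult_in_palg by (simp add: Jideal_def)
next
  assume TV: "pmult n \<delta> a (basis (TVdiag n x y)) \<in> Jideal n Z"
  have "jdiag Z f" if nz: "pmult n \<delta> a (basis (Tdiag n x)) f \<noteq> 0" for f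
  proof -
    obtain d where f: "f = insert {x} (detach x d)"
      using pushforward_nonzero[OF nz[unfolded pmult_Tdiag[OF x]]] by blast
    then have "pmult n \<delta> a (basis (TVdiag n x y)) (attach x y ` detach x d) \<noteq> 0"
      using nz unfolding pmult_Tdiag_at_eq_pmult_TVdiag_at[symmetric] by simp
    then have "jdiag Z (attach x y ` detach x d)"
      using TV by (simp add: Jideal_def)
    then have "jdiag Z (detach x d)"
      using jdiag_attach_iff[OF Z] by blast
    then show ?thesis
      using jdiag_insert_singleton_iff[OF Z(1)] f by blast
  qed
  then show "pmult n \<delta> a (basis (Tdiag n x)) \<in> Jideal n Z"
    using pmult_in_palg by (simp add: Jideal_def)
qed

lemma pmult_TVdiag_in_Jideal:
  assumes Z: "x \<notin> Z" "y \<notin> Z" and j: "j \<in> Jideal n Z"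
  shows "pmult n \<delta> j (basis (TVdiag n x y)) \<in> Jideal n Z"
proof -
  have "jdiag Z f" if nz: "pmult n \<delta> j (basis (TVdiag n x y)) f \<noteq> 0" for f
  proof -
    obtain d where "f = attach x y ` detach x d" "j d * \<delta> ^ (if {x} \<in> d then 1 else 0) \<noteq> 0"
      using pushforward_nonzero[OF nz[unfolded pmult_TVdiag]] by blast
    then have "f = attach x y ` detach x d" "j d \<noteq> 0"
      by auto
    then show ?thesis
      using j jdiag_detach[OF Z(1)] jdiag_attach_iff[OF Z] by (simp add: Jideal_def)
  qed
  then show ?thesis
    using pmult_in_palg by (simp add: Jideal_def)
qed

end

context
  fixes n :: nat and x y :: int
  assumes x: "x \<in> {1..int n}" and y: "y \<in> {1..int n}" and xy: "x \<noteq> y"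
begin

lemma pushforward_attach_detach_in_palg: "pushforward (diagrams n) (\<lambda>d. attach x y ` detach x d) c \<in> palg n"
proof -
  have "f \<in> diagrams n" if nz: "pushforward (diagrams n) (\<lambda>d. attach x y ` detach x d) c f \<noteq> 0" for f
  proof -
    obtain d where "d \<in> diagrams n" "attach x y ` detach x d = f"
      using pushforward_nonzero[OF nz] by blast
    then show ?thesis
      using attach_detach_in_diagrams[OF x y xy] by blast
  qed
  then show ?thesis
    unfolding palg_def by blast
qed

lemma pmult_pushforward_attach_detach_Tdiag:
  assumes c: "c \<in> Aspan n x"
  shows "pmult n \<delta> (pushforward (diagrams n) (\<lambda>d. attach x y ` detach x d) c) (basis (Tdiag n x)) = c"
proof -
  have "pmult n \<delta> (pushforward (diagrams n) (\<lambda>d. attach x y ` detach x d) c) (basis (Tdiag n x))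
      = pushforward (diagrams n) (\<lambda>d. insert {x} (detach x (attach x y ` detach x d)))
          (\<lambda>d. c d * \<delta> ^ (if {x} \<in> attach x y ` detach x d then 1 else 0))"
    unfolding pmult_Tdiag[OF x]
    by (rule pushforward_pushforward[OF finite_diagrams attach_detach_in_diagrams[OF x y xy]])
  also have "\<dots> = pushforward (diagrams n) (\<lambda>d. d) c"
  proof (rule pushforward_cong)
    fix d assume d: "d \<in> diagrams n"
    show "c d * \<delta> ^ (if {x} \<in> attach x y ` detach x d then 1 else 0) = c d"
      by (simp add: singleton_notin_attach_detach)
    assume "c d * \<delta> ^ (if {x} \<in> attach x y ` detach x d then 1 else 0) \<noteq> 0"
    then have "c d \<noteq> 0"
      by auto
    then have "{x} \<in> d"
      using c by (simp add: Aspan_def)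
    then show "insert {x} (detach x (attach x y ` detach x d)) = d"
      by (simp add: detach_attach_detach insert_detach_eq[OF d])
  qed
  also have "\<dots> = c"
    using c finite_diagrams by (intro pushforward_id) (auto simp: Aspan_def palg_def)
  finally show ?thesis .
qed

lemma pmult_Tdiag_Vdiag: "pmult n \<delta> (basis (Tdiag n x)) (basis (Vdiag n x y)) = basis (TVdiag n x y)"
  unfolding pmult_basis_basis[OF Tdiag_in_diagrams[OF x] Vdiag_in_diagrams[OF x y]]
    dcomp_Tdiag_Vdiag[OF x y xy] dloops_Tdiag_Vdiag[OF x y xy]
  by (simp add: basis_def fun_eq_iff eq_commute)

lemma pmult_cdiff:
  assumes "a \<in> palg n"
  shows "pmult n \<delta> a (cdiff n \<delta> x y k)
    = (if odd k then a - pmult n \<delta> a (basis (TVdiag n x y)) else pmult n \<delta> a (basis (TVdiag n x y)))"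
  unfolding cdiff_def pmult_Tdiag_Vdiag psub_eq_minus
  using assms by (simp add: pmult_diff_right pmult_idd)

end

section \<open>Tensoring with the trivial module\<close>

definition tensor_rels :: "nat \<Rightarrow> 'r::comm_ring_1 \<Rightarrow> (int set set \<Rightarrow> 'r) set \<Rightarrow> (int set set \<Rightarrow> 'r) set" where
  "tensor_rels n \<delta> M = {pmult n \<delta> (basis d) m - (\<lambda>e. eps d * m e) | d m. d \<in> diagrams n \<and> m \<in> M}"

lemma tensor1_eq: "tensor1 n \<delta> (M, N) = (M, setplus N (fun_module.span (tensor_rels n \<delta> M)))"
  unfolding tensor1_def tensor_rels_def rspan_eq_span psub_eq_minus by simp

lemma pmult_basis_in_span_tensor_rels:
  assumes "d \<in> diagrams n" "m \<in> M" and eps: "(\<lambda>e. eps d * m e) \<in> fun_module.span (tensor_rels n \<delta> M)"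
  shows "pmult n \<delta> (basis d) m \<in> fun_module.span (tensor_rels n \<delta> M)"
proof -
  have rel: "pmult n \<delta> (basis d) m - (\<lambda>e. eps d * m e) \<in> fun_module.span (tensor_rels n \<delta> M)"
    using assms(1,2) by (intro fun_module.span_base) (auto simp: tensor_rels_def)
  have "pmult n \<delta> (basis d) m = (pmult n \<delta> (basis d) m - (\<lambda>e. eps d * m e)) + (\<lambda>e. eps d * m e)"
    by simp
  also have "\<dots> \<in> fun_module.span (tensor_rels n \<delta> M)"
    using rel eps by (rule fun_module.span_add)
  finally show ?thesis .
qed

lemma eps_Tdiag: "eps (Tdiag n x) = 0"
proof -
  have "{x} \<in> Tdiag n x"
    by (simp add: Tdiag_def)
  moreover have "{x} \<noteq> {- i, j}" if "0 < i" "0 < j" for i j :: int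
    using that by (auto simp: doubleton_eq_iff)
  ultimately have "\<not> is_perm (Tdiag n x)"
    unfolding is_perm_def by blast
  then show ?thesis
    by (simp add: eps_def)
qed

lemma eps_attach_detach:
  assumes d: "d \<in> diagrams n" and x: "x \<in> {1..int n}" and y: "y \<in> {1..int n}" and xy: "x \<noteq> y"
  shows "eps (attach x y ` detach x d) = 0"
proof -
  let ?B = "block_of d y"
  have B: "?B \<in> d" "y \<in> ?B"
    using block_of_mem[OF d] y by (auto simp: nodes_def)
  then have "?B - {x} \<in> detach x d"
    using xy unfolding detach_def by blast
  moreover have "attach x y (?B - {x}) = insert x (?B - {x})"
    using B xy by (simp add: attach_def)
  ultimately have blk: "insert x (?B - {x}) \<in> attach x y ` detach x d"
    by (metis image_eqI)
  have "insert x (?B - {x}) \<noteq> {- i, j}" if "0 < i" "0 < j" for i j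
  proof
    assume "insert x (?B - {x}) = {- i, j}"
    then have "x \<in> {- i, j}" "y \<in> {- i, j}"
      using B xy by auto
    then show False
      using that x y xy by auto
  qed
  then have "\<not> is_perm (attach x y ` detach x d)"
    using blk unfolding is_perm_def by blast
  then show ?thesis
    by (simp add: eps_def)
qed

lemma basis_Tdiag_in_Aspan:
  assumes "x \<in> {1..int n}"
  shows "basis (Tdiag n x) \<in> Aspan n x"
proof -
  have "{x} \<in> Tdiag n x"
    by (simp add: Tdiag_def)
  then show ?thesis
    using basis_in_palg[OF Tdiag_in_diagrams[OF assms]] unfolding Aspan_def basis_def by auto
qed

context
  fixes n :: nat and x y :: int
  assumes x: "x \<in> {1..int n}" and y: "y \<in> {1..int n}" and xy: "x \<noteq> y"
begin

lemma basis_TVdiag_in_span: "basis (TVdiag n x y) \<in> fun_module.span (tensor_rels n \<delta> (palg n))"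
proof -
  have "(\<lambda>e. eps (Tdiag n x) * basis (Vdiag n x y) e) \<in> fun_module.span (tensor_rels n \<delta> (palg n))"
    using fun_module.span_zero by (simp add: eps_Tdiag zero_fun_def)
  then show ?thesis
    using pmult_basis_in_span_tensor_rels[OF Tdiag_in_diagrams[OF x] basis_in_palg[OF Vdiag_in_diagrams[OF x y]]]
    by (simp add: pmult_Tdiag_Vdiag[OF x y xy])
qed

lemma pmult_TVdiag_in_span: "pmult n \<delta> a (basis (TVdiag n x y)) \<in> fun_module.span (tensor_rels n \<delta> (palg n))"
proof -
  have "pmult n \<delta> (basis d) (basis (TVdiag n x y)) \<in> fun_module.span (tensor_rels n \<delta> (palg n))"
    if "d \<in> diagrams n" for d
    using that basis_in_palg[OF TVdiag_in_diagrams[OF y]] fun_module.span_scale[OF basis_TVdiag_in_span]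
    by (rule pmult_basis_in_span_tensor_rels)
  then show ?thesis
    unfolding pmult_eq_sum_basis_left[of n \<delta> a] by (intro fun_module.span_sum fun_module.span_scale)
qed

lemma basis_eq_pmult_Tdiag:
  assumes e: "e \<in> diagrams n" "{x} \<in> e"
  shows "pmult n \<delta> (basis (attach x y ` detach x e)) (basis (Tdiag n x)) = basis e"
proof -
  let ?p = "attach x y ` detach x e"
  have p: "?p \<in> diagrams n"
    using attach_detach_in_diagrams[OF x y xy e(1)] .
  have comp: "dcomp n ?p (Tdiag n x) = e"
    unfolding dcomp_Tdiag[OF p x] detach_attach_detach using insert_detach_eq[OF e] .
  have loops: "dloops n ?p (Tdiag n x) = 0"
    unfolding dloops_Tdiag[OF p x] using singleton_notin_attach_detach by simp
  show ?thesis
    unfolding pmult_basis_basis[OF p Tdiag_in_diagrams[OF x]] comp loops by (auto simp: basis_def)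
qed

lemma Aspan_subset_span: "c \<in> Aspan n x \<Longrightarrow> c \<in> fun_module.span (tensor_rels n \<delta> (Aspan n x))"
proof -
  assume c: "c \<in> Aspan n x"
  have "(\<lambda>f. c e * basis e f) \<in> fun_module.span (tensor_rels n \<delta> (Aspan n x))" if e: "e \<in> diagrams n" for e
  proof (cases "c e = 0")
    case True
    then show ?thesis
      using fun_module.span_zero by (simp add: zero_fun_def)
  next
    case False
    let ?p = "attach x y ` detach x e"
    have "{x} \<in> e"
      using c False by (simp add: Aspan_def)
    moreover have "(\<lambda>f. eps ?p * basis (Tdiag n x) f) \<in> fun_module.span (tensor_rels n \<delta> (Aspan n x))"
      using fun_module.span_zero by (simp add: eps_attach_detach[OF e x y xy] zero_fun_def)
    ultimately have "basis e \<in> fun_module.span (tensor_rels n \<delta> (Aspan n x))"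
      using pmult_basis_in_span_tensor_rels[OF attach_detach_in_diagrams[OF x y xy e] basis_Tdiag_in_Aspan[OF x]]
      by (simp add: basis_eq_pmult_Tdiag[OF e])
    then show ?thesis
      by (rule fun_module.span_scale)
  qed
  then have "(\<Sum>e\<in>diagrams n. (\<lambda>f. c e * basis e f)) \<in> fun_module.span (tensor_rels n \<delta> (Aspan n x))"
    by (rule fun_module.span_sum)
  moreover have "c \<in> palg n"
    using c by (simp add: Aspan_def)
  ultimately show ?thesis
    by (simp only: palg_eq_sum_basis[symmetric])
qed

end

section \<open>Exactness\<close>

lemma idempotent_kernel_eq_image:
  fixes E :: "'a::ab_group_add \<Rightarrow> 'a"
  assumes E_diff: "\<And>p q. E (p - q) = E p - E q" and E_idem: "\<And>p. E (E p) = E p"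
    and N_diff: "\<And>p q. p \<in> N \<Longrightarrow> q \<in> N \<Longrightarrow> p - q \<in> N" and E_N: "\<And>p. p \<in> N \<Longrightarrow> E p \<in> N"
    and a: "a \<in> M"
  shows "E a \<in> N \<longleftrightarrow> (\<exists>b\<in>M. a - (b - E b) \<in> N)"
    and "a - E a \<in> N \<longleftrightarrow> (\<exists>b\<in>M. a - E b \<in> N)"
proof -
  show "E a \<in> N \<longleftrightarrow> (\<exists>b\<in>M. a - (b - E b) \<in> N)"
  proof
    assume "E a \<in> N"
    then show "\<exists>b\<in>M. a - (b - E b) \<in> N"
      using a by (intro bexI[where x = a]) simp_all
  next
    assume "\<exists>b\<in>M. a - (b - E b) \<in> N"
    then obtain b where "a - (b - E b) \<in> N"
      by blast
    then have "E (a - (b - E b)) \<in> N"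
      by (rule E_N)
    then show "E a \<in> N"
      by (simp add: E_diff E_idem)
  qed
  show "a - E a \<in> N \<longleftrightarrow> (\<exists>b\<in>M. a - E b \<in> N)"
  proof
    assume "\<exists>b\<in>M. a - E b \<in> N"
    then obtain b where b: "a - E b \<in> N"
      by blast
    have "(a - E b) - E (a - E b) \<in> N"
      using b E_N[OF b] by (rule N_diff)
    then show "a - E a \<in> N"
      by (simp add: E_diff E_idem)
  qed (use a in blast)
qed

lemma aug_exactI_idempotent:
  assumes E_diff: "\<And>p q. E (p - q) = E p - E q" and E_idem: "\<And>p. E (E p) = E p"
    and N_diff: "\<And>p q. p \<in> N \<Longrightarrow> q \<in> N \<Longrightarrow> p - q \<in> N" and E_N: "\<And>p. p \<in> N \<Longrightarrow> E p \<in> N"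
    and differential: "\<And>a k. a \<in> M \<Longrightarrow> pmult n \<delta> a (u k) = (if odd k then a - E a else E a)"
    and aug_surj: "\<And>c. c \<in> MA \<Longrightarrow> \<exists>a\<in>M. c - pmult n \<delta> a aug \<in> NA"
    and aug_kernel: "\<And>a. a \<in> M \<Longrightarrow> pmult n \<delta> a aug \<in> NA \<longleftrightarrow> E a \<in> N"
  shows "aug_exact n \<delta> (M, N) (MA, NA) u aug"
  unfolding aug_exact_def fst_conv snd_conv psub_eq_minus
proof (intro conjI ballI allI impI)
  have exact: "E a \<in> N \<longleftrightarrow> (\<exists>b\<in>M. a - (b - E b) \<in> N)" "a - E a \<in> N \<longleftrightarrow> (\<exists>b\<in>M. a - E b \<in> N)"
    if "a \<in> M" for a
    using idempotent_kernel_eq_image[where E = E and N = N and M = M and a = a] E_diff E_idem N_diff E_N that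
    by blast+
  show "\<exists>a\<in>M. c - pmult n \<delta> a aug \<in> NA" if "c \<in> MA" for c
    using that by (rule aug_surj)
  show "{a \<in> M. pmult n \<delta> a aug \<in> NA} = {a \<in> M. \<exists>b\<in>M. a - pmult n \<delta> b (u 1) \<in> N}"
    using aug_kernel exact(1) differential by (intro Collect_cong) auto
  show "{a \<in> M. pmult n \<delta> a (u k) \<in> N} = {a \<in> M. \<exists>b\<in>M. a - pmult n \<delta> b (u (Suc k)) \<in> N}" for k
  proof (intro Collect_cong conj_cong refl)
    fix a assume a: "a \<in> M"
    have "(\<exists>b\<in>M. a - pmult n \<delta> b (u (Suc k)) \<in> N)
        \<longleftrightarrow> (\<exists>b\<in>M. a - (if odd k then E b else b - E b) \<in> N)"
      by (rule bex_cong[OF refl]) (simp add: differential)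
    then show "pmult n \<delta> a (u k) \<in> N \<longleftrightarrow> (\<exists>b\<in>M. a - pmult n \<delta> b (u (Suc k)) \<in> N)"
      using exact[OF a] differential[OF a] by (cases "odd k") simp_all
  qed
qed

lemma zero_in_Jideal: "0 \<in> Jideal n Z"
  by (simp add: Jideal_def palg_def)

lemma Jideal_diff: "u \<in> Jideal n Z \<Longrightarrow> v \<in> Jideal n Z \<Longrightarrow> u - v \<in> Jideal n Z"
  by (auto simp: Jideal_def palg_def) metis

lemma zero_in_Aspan: "0 \<in> Aspan n x"
  by (simp add: Aspan_def palg_def)

lemma pmult_zero_left: "pmult n \<delta> 0 b = 0"
  by (simp add: pmult_def fun_eq_iff cong: if_cong)

lemma in_setplusI: "a \<in> A \<Longrightarrow> b \<in> B \<Longrightarrow> a + b \<in> setplus A B"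
  unfolding setplus_def padd_eq_plus by blast

lemma in_setplus_right: "0 \<in> A \<Longrightarrow> v \<in> B \<Longrightarrow> v \<in> setplus A B"
  using in_setplusI[of 0 A v B] by simp

lemma setplus_span_diff:
  assumes A: "\<And>u v. u \<in> A \<Longrightarrow> v \<in> A \<Longrightarrow> u - v \<in> A"
    and u: "u \<in> setplus A (fun_module.span S)" and v: "v \<in> setplus A (fun_module.span S)"
  shows "u - v \<in> setplus A (fun_module.span S)"
proof -
  obtain a1 b1 a2 b2 where "u = a1 + b1" "v = a2 + b2" "a1 \<in> A" "a2 \<in> A"
    "b1 \<in> fun_module.span S" "b2 \<in> fun_module.span S"
    using u v unfolding setplus_def padd_eq_plus by blast
  moreover have "a1 - a2 + (b1 - b2) \<in> setplus A (fun_module.span S)"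
    using calculation A fun_module.span_diff by (intro in_setplusI) simp_all
  ultimately show ?thesis
    by (simp add: algebra_simps)
qed

context
  fixes n :: nat and x y :: int and Z :: "int set"
  assumes x: "x \<in> {1..int n}" and y: "y \<in> {1..int n}" and xy: "x \<noteq> y"
    and Z: "x \<notin> Z" "y \<notin> Z"
begin

lemma aug_exact_cdiff:
  "aug_exact n \<delta> (palg n, Jideal n Z) (Aspan n x, Aspan n x \<inter> Jideal n Z)
     (cdiff n \<delta> x y) (basis (Tdiag n x))"
proof -
  let ?E = "\<lambda>a. pmult n \<delta> a (basis (TVdiag n x y))"
  let ?lift = "pushforward (diagrams n) (\<lambda>d. attach x y ` detach x d)"
  show ?thesis
  proof (rule aug_exactI_idempotent[where E = ?E])
    show "pmult n \<delta> a (cdiff n \<delta> x y k) = (if odd k then a - ?E a else ?E a)" if "a \<in> palg n" for a k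
      using that by (rule pmult_cdiff[OF x y xy])
    show "\<exists>a\<in>palg n. c - pmult n \<delta> a (basis (Tdiag n x)) \<in> Aspan n x \<inter> Jideal n Z"
      if "c \<in> Aspan n x" for c
    proof
      show "c - pmult n \<delta> (?lift c) (basis (Tdiag n x)) \<in> Aspan n x \<inter> Jideal n Z"
        unfolding pmult_pushforward_attach_detach_Tdiag[OF x y xy that]
        by (simp add: zero_in_Aspan zero_in_Jideal)
    qed (rule pushforward_attach_detach_in_palg[OF x y xy])
    show "pmult n \<delta> a (basis (Tdiag n x)) \<in> Aspan n x \<inter> Jideal n Z \<longleftrightarrow> ?E a \<in> Jideal n Z" for a
      using pmult_Tdiag_in_Aspan[OF x] pmult_Tdiag_in_Jideal_iff[OF x y xy Z] by blast
  qed (simp_all add: pmult_diff_left pmult_TVdiag_idem[OF x y xy] Jideal_diff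
      pmult_TVdiag_in_Jideal[OF x y xy Z])
qed

lemma aug_exact_cdiff_tensor1:
  "aug_exact n \<delta> (tensor1 n \<delta> (palg n, Jideal n Z)) (tensor1 n \<delta> (Aspan n x, Aspan n x \<inter> Jideal n Z))
     (cdiff n \<delta> x y) (basis (Tdiag n x))"
proof -
  let ?E = "\<lambda>a. pmult n \<delta> a (basis (TVdiag n x y))"
  let ?N = "setplus (Jideal n Z) (fun_module.span (tensor_rels n \<delta> (palg n)))"
  let ?NA = "setplus (Aspan n x \<inter> Jideal n Z) (fun_module.span (tensor_rels n \<delta> (Aspan n x)))"
  have E_rel: "?E a \<in> ?N" for a
    by (rule in_setplus_right[OF zero_in_Jideal pmult_TVdiag_in_span[OF x y xy]])
  have A_rel: "c \<in> ?NA" if "c \<in> Aspan n x" for c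
    using Aspan_subset_span[OF x y xy that]
    by (intro in_setplus_right) (simp_all add: zero_in_Aspan zero_in_Jideal)
  have "aug_exact n \<delta> (palg n, ?N) (Aspan n x, ?NA) (cdiff n \<delta> x y) (basis (Tdiag n x))"
  proof (rule aug_exactI_idempotent[where E = ?E])
    show "pmult n \<delta> a (cdiff n \<delta> x y k) = (if odd k then a - ?E a else ?E a)" if "a \<in> palg n" for a k
      using that by (rule pmult_cdiff[OF x y xy])
    show "\<exists>a\<in>palg n. c - pmult n \<delta> a (basis (Tdiag n x)) \<in> ?NA" if "c \<in> Aspan n x" for c
      using A_rel[OF that] by (intro bexI[where x = 0]) (simp_all add: pmult_zero_left palg_def)
    show "pmult n \<delta> a (basis (Tdiag n x)) \<in> ?NA \<longleftrightarrow> ?E a \<in> ?N" for a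
      using A_rel[OF pmult_Tdiag_in_Aspan[OF x]] E_rel by blast
    show "p - q \<in> ?N" if "p \<in> ?N" "q \<in> ?N" for p q
      using Jideal_diff that by (rule setplus_span_diff)
    show "?E p \<in> ?N" for p
      by (rule E_rel)
  qed (simp_all add: pmult_diff_left pmult_TVdiag_idem[OF x y xy])
  then show ?thesis
    unfolding tensor1_eq .
qed

end

theorem proposition4p9:
  fixes \<delta> :: "'r::comm_ring_1" and n :: nat and X :: "int set" and x y :: int
  assumes "X \<subseteq> {1 .. int n}" and "card X < n" and "x \<in> X"
    and "y \<in> {1 .. int n} - X" and "n \<ge> 2"
  shows "aug_exact n \<delta> (palg n, Jideal n (X - {x}))
           (Aspan n x, Aspan n x \<inter> Jideal n (X - {x}))
           (cdiff n \<delta> x y) (basis (Tdiag n x))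
       \<and> aug_exact n \<delta> (tensor1 n \<delta> (palg n, Jideal n (X - {x})))
           (tensor1 n \<delta> (Aspan n x, Aspan n x \<inter> Jideal n (X - {x})))
           (cdiff n \<delta> x y) (basis (Tdiag n x))"
proof -
  have "x \<in> {1..int n}" "y \<in> {1..int n}" "x \<noteq> y" "x \<notin> X - {x}" "y \<notin> X - {x}"
    using assms(1,3,4) by auto
  then show ?thesis
    by (intro conjI aug_exact_cdiff aug_exact_cdiff_tensor1)
qed

end
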